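(* Let $S \geq 1$ and, for $i = 1,\dots,S$, let $\boldsymbol{M}_i \in \mathbb{R}^{m_i \times m_i}$ be symmetric positive definite, let $\boldsymbol{K}_i \in \mathbb{R}^{m_i \times m_i}$ be symmetric positive semidefinite, and let $\boldsymbol{C}_i \in \mathbb{R}^{p \times m_i}$ be signed Boolean matrices such that $[\boldsymbol{C}_1 \ \cdots \ \boldsymbol{C}_S]$ has full row rank $p$. Let $0 \le \gamma \le 1$, $\Delta t > 0$ and $\alpha > 0$, and let $\omega_i^{\max}$ denote the largest eigenvalue of $\boldsymbol{K}_i \boldsymbol{\phi} = \omega \boldsymbol{M}_i \boldsymbol{\phi}$. Assume that either $1/2 \le \gamma \le 1$ (with no further restriction on $\alpha>0$, $\Delta t>0$), or $0 \le \gamma < 1/2$ together with $\alpha \le 1/|\gamma - 1/2|$ and $\Delta t\, \omega_i^{\max} \le \frac{2}{1-2\gamma} - \alpha$ for all $i$. Suppose sequences $\boldsymbol{d}_i^{(n)}, \boldsymbol{v}_i^{(n)} \in \mathbb{R}^{m_i}$ and $\boldsymbol{\lambda}^{(n)} \in \mathbb{R}^p$, $n \geq 0$, satisfy (the Baumgarte stabilized method with zero external forcing): for all $n \ge 0$ and all $i$, $\boldsymbol{M}_i \boldsymbol{v}_i^{(n)} + \boldsymbol{K}_i \boldsymbol{d}_i^{(n)} = \boldsymbol{C}_i^{\mathrm{T}} \boldsymbol{\lambda}^{(n)}$ and $\sum_{i=1}^S \boldsymbol{C}_i \boldsymbol{v}_i^{(n)} + \frac{\alpha}{\Delta t}\sum_{i=1}^S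 \boldsymbol{C}_i \boldsymbol{d}_i^{(n)} = \boldsymbol{0}$; and for all $n \geq 1$, $\boldsymbol{d}_i^{(n)} = \boldsymbol{d}_i^{(n-1)} + \Delta t\left((1-\gamma)\boldsymbol{v}_i^{(n-1)} + \gamma \boldsymbol{v}_i^{(n)}\right)$. Then the sequences $(\boldsymbol{v}_i^{(n)})_n$, $(\boldsymbol{d}_i^{(n+1)} - \boldsymbol{d}_i^{(n)})_n$ ($i=1,\dots,S$), $(\boldsymbol{\lambda}^{(n+1)} - \boldsymbol{\lambda}^{(n)})_n$ and the constraint drift $\left(\sum_{i=1}^S \boldsymbol{C}_i \boldsymbol{d}_i^{(n)}\right)_n$ are all bounded.
   Context: A signed Boolean matrix is a matrix whose entries are in $\{-1,0,+1\}$ and each of whose rows has at most one nonzero entry. A sequence of vectors is bounded if there is a constant $C$ independent of $n$ with $\|\boldsymbol{x}^{(n)}\| < C$ for all $n$. For $\omega_i^{\max} > 0$ the time-step condition reads $\Delta t \le \frac{2}{(1-2\gamma)\omega_i^{\max}} - \frac{\alpha}{\omega_i^{\max}}$. *)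

theory Defs
  imports "Jordan_Normal_Form.DL_Rank"
begin

definition vnorm :: "real vec \<Rightarrow> real" where
  "vnorm x = sqrt (x \<bullet> x)"

definition bounded_seq :: "(nat \<Rightarrow> real vec) \<Rightarrow> bool" where
  "bounded_seq x \<longleftrightarrow> (\<exists>C. \<forall>n. vnorm (x n) < C)"

definition sym_mat :: "real mat \<Rightarrow> bool" where
  "sym_mat A \<longleftrightarrow> transpose_mat A = A"

definition pos_def_mat :: "nat \<Rightarrow> real mat \<Rightarrow> bool" where
  "pos_def_mat n A \<longleftrightarrow> A \<in> carrier_mat n n \<and> sym_mat A \<and>
     (\<forall>x \<in> carrier_vec n. x \<noteq> 0\<^sub>v n \<longrightarrow> x \<bullet> (A *\<^sub>v x) > 0)"

definition pos_semidef_mat :: "nat \<Rightarrow> real mat \<Rightarrow> bool" where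
  "pos_semidef_mat n A \<longleftrightarrow> A \<in> carrier_mat n n \<and> sym_mat A \<and>
     (\<forall>x \<in> carrier_vec n. x \<bullet> (A *\<^sub>v x) \<ge> 0)"

definition signed_boolean_mat :: "real mat \<Rightarrow> bool" where
  "signed_boolean_mat C \<longleftrightarrow>
     (\<forall>r < dim_row C. \<forall>c < dim_col C. C $$ (r,c) \<in> {-1, 0, 1}) \<and>
     (\<forall>r < dim_row C. \<forall>c < dim_col C. \<forall>c' < dim_col C.
        C $$ (r,c) \<noteq> 0 \<longrightarrow> C $$ (r,c') \<noteq> 0 \<longrightarrow> c = c')"

text \<open>Horizontal concatenation [C_0 ... C_{S-1}] of p-row matrices.\<close>
definition block_row :: "nat \<Rightarrow> (nat \<Rightarrow> real mat) \<Rightarrow> nat \<Rightarrow> real mat" where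
  "block_row p C S = transpose_mat (foldr (\<lambda>i A. transpose_mat (C i) @\<^sub>r A) [0..<S] (0\<^sub>m 0 p))"

definition gen_eigenvalues :: "real mat \<Rightarrow> real mat \<Rightarrow> real set" where
  "gen_eigenvalues K M = {\<omega>. \<exists>\<phi> \<in> carrier_vec (dim_row K). \<phi> \<noteq> 0\<^sub>v (dim_row K) \<and>
       K *\<^sub>v \<phi> = \<omega> \<cdot>\<^sub>v (M *\<^sub>v \<phi>)}"

definition omega_max :: "real mat \<Rightarrow> real mat \<Rightarrow> real" where
  "omega_max K M = Max (gen_eigenvalues K M)"

definition vsum :: "nat \<Rightarrow> (nat \<Rightarrow> real vec) \<Rightarrow> nat set \<Rightarrow> real vec" where
  "vsum p f I = vec p (\<lambda>r. \<Sum>i\<in>I. f i $ r)"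

end

theory Submission
  imports Defs "HOL-Analysis.Function_Topology" "HOL-Analysis.L2_Norm" "Jordan_Normal_Form.Char_Poly"
begin

(*
  Write g n = sum_i C_i d_i(n) for the constraint drift. The stabilized constraint says that
  sum_i C_i v_i(n) = -(alpha/dt) g n, so the Newmark update turns into g(n+1) = rho g(n) with
  rho = (1 - alpha (1 - gamma)) / (1 + alpha gamma), and the conditions on alpha give -1 <= rho < 1.

  Subtracting rho times step n from step n+1 removes this drift mode: the differences
  v_i(n+1) - rho v_i(n), d_i(n+1) - rho d_i(n), lambda(n+1) - rho lambda(n) solve the same
  Newmark scheme, but with the homogeneous constraint sum_i C_i v_i = 0. For that scheme the
  classical energy argument shows that the kinetic energy sum_i v_i . M_i v_i does not increase
  under the time-step condition, so the differences are bounded, and hence so are the v_i when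
  |rho| < 1. In the borderline case rho = -1 the time-step condition forces K_i = 0, the energy
  vanishes, and |v_i(n)| is constant. Bounded velocities bound the displacement increments, then
  C_i^T (lambda(n+1) - lambda(n)) through the equation of motion, and the full row rank of
  [C_1 ... C_S] turns this into a bound on the multiplier increments.
*)

section \<open>Quadratic forms\<close>

lemma scalar_prod_eq_sum:
  fixes x y :: "'a :: comm_semiring_0 vec"
  assumes "x \<in> carrier_vec n" "y \<in> carrier_vec n"
  shows "x \<bullet> y = (\<Sum>i<n. x $ i * y $ i)"
  using assms unfolding scalar_prod_def by (auto simp: atLeast0LessThan)

lemma mult_mat_vec_index_sum:
  fixes A :: "real mat"
  assumes "A \<in> carrier_mat nr nc" "x \<in> carrier_vec nc" "i < nr"
  shows "(A *\<^sub>v x) $ i = (\<Sum>j<nc. A $$ (i,j) * x $ j)"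
  using assms by (auto simp: scalar_prod_def row_def atLeast0LessThan intro!: sum.cong)

lemma bilinear_form_eq_sum:
  fixes A :: "real mat"
  assumes A: "A \<in> carrier_mat nr nc" and x: "x \<in> carrier_vec nc" and y: "y \<in> carrier_vec nr"
  shows "y \<bullet> (A *\<^sub>v x) = (\<Sum>i<nr. \<Sum>j<nc. y $ i * A $$ (i,j) * x $ j)"
proof -
  have "y \<bullet> (A *\<^sub>v x) = (\<Sum>i<nr. y $ i * (A *\<^sub>v x) $ i)"
    using assms by (intro scalar_prod_eq_sum) auto
  also have "\<dots> = (\<Sum>i<nr. \<Sum>j<nc. y $ i * A $$ (i,j) * x $ j)"
    by (intro sum.cong refl) (subst mult_mat_vec_index_sum[OF A x], auto simp: sum_distrib_left mult.assoc)
  finally show ?thesis .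
qed

lemma transpose_mult_mat_vec_scalar_prod:
  fixes A :: "real mat"
  assumes "A \<in> carrier_mat nr nc" "x \<in> carrier_vec nc" "y \<in> carrier_vec nr"
  shows "x \<bullet> (transpose_mat A *\<^sub>v y) = y \<bullet> (A *\<^sub>v x)"
  using assms transpose_vec_mult_scalar[OF assms]
  by (metis comm_scalar_prod mult_mat_vec_carrier transpose_carrier_mat)

lemma sym_mat_scalar_prod_swap:
  fixes A :: "real mat"
  assumes "A \<in> carrier_mat n n" "sym_mat A" "x \<in> carrier_vec n" "y \<in> carrier_vec n"
  shows "y \<bullet> (A *\<^sub>v x) = x \<bullet> (A *\<^sub>v y)"
  using transpose_mult_mat_vec_scalar_prod[OF assms(1,3,4)] assms(2) by (simp add: sym_mat_def)

lemma scalar_prod_self_nonneg: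
  fixes x :: "real vec"
  shows "x \<bullet> x \<ge> 0"
  unfolding scalar_prod_def by (auto intro: sum_nonneg)

lemma scalar_prod_self_eq_0:
  fixes x :: "real vec"
  assumes "x \<in> carrier_vec n"
  shows "x \<bullet> x = 0 \<longleftrightarrow> x = 0\<^sub>v n"
proof
  assume "x \<bullet> x = 0"
  then have "\<forall>j\<in>{0..<dim_vec x}. x $ j * x $ j = 0"
    unfolding scalar_prod_def by (subst (asm) sum_nonneg_eq_0_iff) auto
  then show "x = 0\<^sub>v n" using assms by (intro eq_vecI) auto
qed simp

lemma scalar_prod_smult_self:
  fixes x :: "real vec"
  assumes "x \<in> carrier_vec n"
  shows "(a \<cdot>\<^sub>v x) \<bullet> (a \<cdot>\<^sub>v x) = a^2 * (x \<bullet> x)"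
  using assms by (simp add: power2_eq_square)

lemma quadratic_form_smult:
  fixes A :: "real mat"
  assumes "A \<in> carrier_mat n n" "x \<in> carrier_vec n"
  shows "(a \<cdot>\<^sub>v x) \<bullet> (A *\<^sub>v (a \<cdot>\<^sub>v x)) = a^2 * (x \<bullet> (A *\<^sub>v x))"
  using assms by (simp add: mult_mat_vec power2_eq_square)

lemma bilinear_form_lincomb:
  fixes A :: "real mat"
  assumes A: "A \<in> carrier_mat n n" and x: "x \<in> carrier_vec n" and y: "y \<in> carrier_vec n"
    and w: "w \<in> carrier_vec n"
  shows "w \<bullet> (A *\<^sub>v (s \<cdot>\<^sub>v x + t \<cdot>\<^sub>v y)) = s * (w \<bullet> (A *\<^sub>v x)) + t * (w \<bullet> (A *\<^sub>v y))"
proof -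
  have "A *\<^sub>v (s \<cdot>\<^sub>v x + t \<cdot>\<^sub>v y) = s \<cdot>\<^sub>v (A *\<^sub>v x) + t \<cdot>\<^sub>v (A *\<^sub>v y)"
    using A x y by (simp add: mult_add_distrib_mat_vec[of A n n] mult_mat_vec[of A n n])
  then show ?thesis using A x y w by (simp add: scalar_prod_add_distrib[of _ n])
qed

lemma bilinear_form_lincomb2:
  fixes A :: "real mat"
  assumes A: "A \<in> carrier_mat n n" and x: "x \<in> carrier_vec n" and y: "y \<in> carrier_vec n"
  shows "(s1 \<cdot>\<^sub>v x + t1 \<cdot>\<^sub>v y) \<bullet> (A *\<^sub>v (s2 \<cdot>\<^sub>v x + t2 \<cdot>\<^sub>v y)) =
     s1*s2*(x \<bullet> (A *\<^sub>v x)) + s1*t2*(x \<bullet> (A *\<^sub>v y)) + t1*s2*(y \<bullet> (A *\<^sub>v x)) + t1*t2*(y \<bullet> (A *\<^sub>v y))"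
proof -
  have "(s1 \<cdot>\<^sub>v x + t1 \<cdot>\<^sub>v y) \<bullet> (A *\<^sub>v (s2 \<cdot>\<^sub>v x + t2 \<cdot>\<^sub>v y)) =
      s1 * (x \<bullet> (A *\<^sub>v (s2 \<cdot>\<^sub>v x + t2 \<cdot>\<^sub>v y))) + t1 * (y \<bullet> (A *\<^sub>v (s2 \<cdot>\<^sub>v x + t2 \<cdot>\<^sub>v y)))"
    using A x y by (simp add: add_scalar_prod_distrib[of _ n])
  then show ?thesis
    unfolding bilinear_form_lincomb[OF A x y x] bilinear_form_lincomb[OF A x y y]
    by (simp add: algebra_simps)
qed

lemma quadratic_form_add_smult:
  fixes A :: "real mat"
  assumes A: "A \<in> carrier_mat n n" "sym_mat A" and x: "x \<in> carrier_vec n" and y: "y \<in> carrier_vec n"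
  shows "(x + t \<cdot>\<^sub>v y) \<bullet> (A *\<^sub>v (x + t \<cdot>\<^sub>v y))
    = x \<bullet> (A *\<^sub>v x) + 2 * t * (y \<bullet> (A *\<^sub>v x)) + t^2 * (y \<bullet> (A *\<^sub>v y))"
proof -
  have "x + t \<cdot>\<^sub>v y = 1 \<cdot>\<^sub>v x + t \<cdot>\<^sub>v y" using x y by simp
  then show ?thesis
    using bilinear_form_lincomb2[OF A(1) x y, of 1 t 1 t] sym_mat_scalar_prod_swap[OF A x y]
    by (simp add: power2_eq_square algebra_simps)
qed

lemma pos_semidef_mat_cross_term:
  assumes K: "pos_semidef_mat n K" and x: "x \<in> carrier_vec n" and y: "y \<in> carrier_vec n"
    and t: "t > 0"
  shows "- 2 * (y \<bullet> (K *\<^sub>v x)) \<le> t * (y \<bullet> (K *\<^sub>v y)) + (x \<bullet> (K *\<^sub>v x)) / t"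
proof -
  have Kc: "K \<in> carrier_mat n n" "sym_mat K" using K unfolding pos_semidef_mat_def by auto
  have "0 \<le> (x + t \<cdot>\<^sub>v y) \<bullet> (K *\<^sub>v (x + t \<cdot>\<^sub>v y))"
    using K x y unfolding pos_semidef_mat_def by simp
  also have "\<dots> = t * (t * (y \<bullet> (K *\<^sub>v y)) + 2 * (y \<bullet> (K *\<^sub>v x)) + (x \<bullet> (K *\<^sub>v x)) / t)"
    using t by (simp add: quadratic_form_add_smult[OF Kc x y] power2_eq_square field_simps)
  finally show ?thesis using t by (simp add: zero_le_mult_iff)
qed

lemma pos_def_mat_nonneg:
  assumes "pos_def_mat n M" "x \<in> carrier_vec n"
  shows "x \<bullet> (M *\<^sub>v x) \<ge> 0"
  using assms unfolding pos_def_mat_def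
  by (cases "x = 0\<^sub>v n") (auto intro: less_imp_le)

section \<open>Coercivity from compactness of the unit sphere\<close>

text \<open>The unit sphere of carrier_vec n, encoded by coordinate functions that vanish from n on,
  so that it is compact in the product topology.\<close>
definition coord_sphere :: "nat \<Rightarrow> (nat \<Rightarrow> real) set" where
  "coord_sphere n = {x. (\<forall>i. x i \<in> (if i < n then {-1..1} else {0})) \<and> (\<Sum>i<n. (x i)^2) = 1}"

lemma compact_coord_sphere: "compact (coord_sphere n)"
proof -
  define B where "B = Pi\<^sub>E UNIV (\<lambda>i::nat. if i < n then {-1..1::real} else {0})"
  have "compactin (product_topology (\<lambda>_. euclidean) UNIV) B"
    unfolding B_def by (subst compactin_PiE) auto
  then have "compact B" by (simp add: euclidean_product_topology)
  moreover have "closed {x::nat\<Rightarrow>real. (\<Sum>i<n. (x i)^2) = 1}"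
    by (intro closed_Collect_eq continuous_intros) (auto intro: continuous_on_product_coordinates)
  moreover have "x \<in> B \<longleftrightarrow> (\<forall>i. x i \<in> (if i < n then {-1..1} else {0}))" for x
    unfolding B_def by (simp add: PiE_iff)
  then have "coord_sphere n = B \<inter> {x. (\<Sum>i<n. (x i)^2) = 1}"
    unfolding coord_sphere_def by blast
  ultimately show ?thesis using compact_Int_closed by simp
qed

lemma coord_sphere_vec:
  assumes "x \<in> coord_sphere n"
  shows "vec n x \<bullet> vec n x = 1"
  using assms unfolding coord_sphere_def
  by (subst scalar_prod_eq_sum[of _ n]) (auto simp: power2_eq_square)

lemma unit_vec_in_coord_sphere:
  assumes z: "z \<in> carrier_vec n" "z \<bullet> z = 1"
  shows "(\<lambda>i. if i < n then z $ i else 0) \<in> coord_sphere n"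
proof -
  have sum_sq: "(\<Sum>i<n. (z $ i)^2) = 1"
    using z scalar_prod_eq_sum[OF z(1) z(1)] by (simp add: power2_eq_square)
  have "\<bar>z $ i\<bar> \<le> 1" if "i < n" for i
  proof -
    have "(z $ i)^2 \<le> (\<Sum>j<n. (z $ j)^2)" using that by (intro member_le_sum) auto
    then have "(z $ i)^2 \<le> 1^2" using sum_sq by simp
    then show ?thesis by (metis abs_le_square_iff abs_one)
  qed
  then show ?thesis using sum_sq unfolding coord_sphere_def by (auto simp: abs_le_iff)
qed

lemma scale_invariant_attains_min:
  fixes F :: "real vec \<Rightarrow> real"
  assumes n: "n > 0" and cont: "continuous_on (coord_sphere n) (\<lambda>x. F (vec n x))"
    and inv: "\<And>x a. x \<in> carrier_vec n \<Longrightarrow> a \<noteq> 0 \<Longrightarrow> F (a \<cdot>\<^sub>v x) = F x"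
  shows "\<exists>z\<in>carrier_vec n. z \<noteq> 0\<^sub>v n \<and> (\<forall>x\<in>carrier_vec n. x \<noteq> 0\<^sub>v n \<longrightarrow> F z \<le> F x)"
proof -
  have "(\<lambda>i. if i = 0 then 1 else 0) \<in> coord_sphere n"
    using n unfolding coord_sphere_def by (auto simp: if_distrib[of "\<lambda>x. x^2"] cong: if_cong)
  then obtain y where y: "y \<in> coord_sphere n"
    and min: "\<And>x. x \<in> coord_sphere n \<Longrightarrow> F (vec n y) \<le> F (vec n x)"
    using continuous_attains_inf[OF compact_coord_sphere _ cont] by blast
  show ?thesis
  proof (intro bexI conjI ballI impI)
    show "vec n y \<noteq> 0\<^sub>v n" using coord_sphere_vec[OF y] by auto
    fix x :: "real vec" assume x: "x \<in> carrier_vec n" "x \<noteq> 0\<^sub>v n"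
    define s where "s = sqrt (x \<bullet> x)"
    have s: "s > 0" "s^2 = x \<bullet> x"
      using x scalar_prod_self_eq_0[OF x(1)] scalar_prod_self_nonneg[of x]
      unfolding s_def by auto
    define u where "u = (1/s) \<cdot>\<^sub>v x"
    have u: "u \<in> carrier_vec n" "u \<bullet> u = 1"
      unfolding u_def using x s by (auto simp: scalar_prod_smult_self[OF x(1)] power_divide)
    have "vec n (\<lambda>i. if i < n then u $ i else 0) = u" using u by (intro eq_vecI) auto
    then have "F (vec n y) \<le> F u" using min[OF unit_vec_in_coord_sphere[OF u]] by simp
    also have "F u = F x" unfolding u_def using inv x s by simp
    finally show "F (vec n y) \<le> F x" .
  qed simp
qed

lemma continuous_on_quadratic_form:
  fixes A :: "real mat"
  assumes A: "A \<in> carrier_mat n n"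
  shows "continuous_on T (\<lambda>x. vec n x \<bullet> (A *\<^sub>v vec n x))"
proof -
  have "vec n x \<bullet> (A *\<^sub>v vec n x) = (\<Sum>i<n. \<Sum>j<n. x i * A $$ (i,j) * x j)" for x
    by (subst bilinear_form_eq_sum[OF A]) auto
  then show ?thesis
    by (simp only:) (intro continuous_intros continuous_on_subset[OF continuous_on_product_coordinates], auto)
qed

lemma positive_quadratic_coercive:
  fixes Q :: "real vec \<Rightarrow> real"
  assumes cont: "continuous_on (coord_sphere n) (\<lambda>x. Q (vec n x))"
    and hom: "\<And>x a. x \<in> carrier_vec n \<Longrightarrow> Q (a \<cdot>\<^sub>v x) = a^2 * Q x"
    and pos: "\<And>x. x \<in> carrier_vec n \<Longrightarrow> x \<noteq> 0\<^sub>v n \<Longrightarrow> Q x > 0"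
  shows "\<exists>c>0. \<forall>x\<in>carrier_vec n. c * (x \<bullet> x) \<le> Q x"
proof -
  have "0 \<cdot>\<^sub>v 0\<^sub>v n = (0\<^sub>v n :: real vec)" by (intro eq_vecI) auto
  then have Q0: "Q (0\<^sub>v n) = 0" using hom[of "0\<^sub>v n" 0] by simp
  show ?thesis
  proof (cases "n = 0")
    case True
    then show ?thesis using Q0 by (intro exI[of _ 1]) (auto simp: scalar_prod_def dest!: carrier_vecD)
  next
    case False
    define F where "F x = Q x / (x \<bullet> x)" for x
    have "continuous_on (coord_sphere n) (\<lambda>x. F (vec n x))"
      using cont by (rule continuous_on_cong[THEN iffD1, rotated 2]) (auto simp: F_def coord_sphere_vec)
    moreover have "F (a \<cdot>\<^sub>v x) = F x" if "x \<in> carrier_vec n" "a \<noteq> 0" for x a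
      using that by (cases "x \<bullet> x = 0") (simp_all add: F_def hom scalar_prod_smult_self field_simps power2_eq_square)
    ultimately obtain z where z: "z \<in> carrier_vec n" "z \<noteq> 0\<^sub>v n"
      and min: "\<And>x. x \<in> carrier_vec n \<Longrightarrow> x \<noteq> 0\<^sub>v n \<Longrightarrow> F z \<le> F x"
      using scale_invariant_attains_min[of n F] False by blast
    have zz: "z \<bullet> z > 0"
      using z scalar_prod_self_eq_0[OF z(1)] scalar_prod_self_nonneg[of z] by fastforce
    show ?thesis
    proof (intro exI[of _ "F z"] conjI ballI)
      show "F z > 0" using pos[OF z] zz by (simp add: F_def)
      fix x :: "real vec" assume x: "x \<in> carrier_vec n"
      show "F z * (x \<bullet> x) \<le> Q x"
      proof (cases "x = 0\<^sub>v n")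
        case True
        then show ?thesis using Q0 by simp
      next
        case False
        have "x \<bullet> x > 0"
          using False scalar_prod_self_eq_0[OF x] scalar_prod_self_nonneg[of x] by fastforce
        then show ?thesis using min[OF x False] by (simp add: F_def pos_le_divide_eq)
      qed
    qed
  qed
qed

lemma pos_def_mat_coercive:
  assumes "pos_def_mat n M"
  shows "\<exists>c>0. \<forall>x\<in>carrier_vec n. c * (x \<bullet> x) \<le> x \<bullet> (M *\<^sub>v x)"
proof -
  have M: "M \<in> carrier_mat n n" using assms unfolding pos_def_mat_def by auto
  show ?thesis
    by (rule positive_quadratic_coercive[OF continuous_on_quadratic_form[OF M]])
      (use assms quadratic_form_smult[OF M] in \<open>auto simp: pos_def_mat_def\<close>)
qed

section \<open>Generalized eigenvalues and the Rayleigh quotient\<close>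

lemma pos_def_mat_left_inverse:
  assumes "pos_def_mat n M"
  shows "\<exists>B\<in>carrier_mat n n. B * M = 1\<^sub>m n"
proof -
  have M: "M \<in> carrier_mat n n" using assms unfolding pos_def_mat_def by auto
  have "det M \<noteq> 0"
  proof
    assume "det M = 0"
    then obtain v where v: "v \<in> carrier_vec n" "v \<noteq> 0\<^sub>v n" "M *\<^sub>v v = 0\<^sub>v n"
      using det_0_iff_vec_prod_zero_field[OF M] by blast
    then have "v \<bullet> (M *\<^sub>v v) = 0" by simp
    moreover have "v \<bullet> (M *\<^sub>v v) > 0" using assms v unfolding pos_def_mat_def by auto
    ultimately show False by simp
  qed
  from det_non_zero_imp_unit[OF M this, of "()"]
  show ?thesis unfolding Units_def ring_mat_def by auto
qed

text \<open>With a left inverse B of M, generalized eigenvalues are eigenvalues of B K.\<close>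
lemma finite_gen_eigenvalues:
  assumes "pos_def_mat n M" "K \<in> carrier_mat n n"
  shows "finite (gen_eigenvalues K M)"
proof -
  have M: "M \<in> carrier_mat n n" using assms unfolding pos_def_mat_def by auto
  obtain B where B: "B \<in> carrier_mat n n" "B * M = 1\<^sub>m n" using pos_def_mat_left_inverse[OF assms(1)] by blast
  have BK: "B * K \<in> carrier_mat n n" using B assms by auto
  have "gen_eigenvalues K M \<subseteq> {x. poly (char_poly (B * K)) x = 0}"
  proof
    fix w assume "w \<in> gen_eigenvalues K M"
    then obtain \<phi> where \<phi>: "\<phi> \<in> carrier_vec n" "\<phi> \<noteq> 0\<^sub>v n" "K *\<^sub>v \<phi> = w \<cdot>\<^sub>v (M *\<^sub>v \<phi>)"
      unfolding gen_eigenvalues_def using assms by auto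
    have "(B * K) *\<^sub>v \<phi> = w \<cdot>\<^sub>v (B *\<^sub>v (M *\<^sub>v \<phi>))"
      using B M assms \<phi> by (simp add: mult_mat_vec[of B n n])
    also have "B *\<^sub>v (M *\<^sub>v \<phi>) = \<phi>" using B M \<phi>
      by (metis assoc_mult_mat_vec one_mult_mat_vec)
    finally have "eigenvalue (B * K) w" unfolding eigenvalue_def eigenvector_def using \<phi> BK B by auto
    then show "w \<in> {x. poly (char_poly (B * K)) x = 0}"
      using eigenvalue_root_char_poly[OF BK] by auto
  qed
  moreover have "char_poly (B * K) \<noteq> 0"
    using degree_monic_char_poly[OF BK] by auto
  ultimately show ?thesis using poly_roots_finite finite_subset by blast
qed

lemma linear_term_eq_0_if_nonpos:
  fixes a c :: real
  assumes "\<And>t. 2 * t * a + t^2 * c \<le> 0"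
  shows "a = 0"
proof (rule ccontr)
  assume a: "a \<noteq> 0"
  define k where "k = \<bar>c\<bar> + 1"
  define t where "t = a / k"
  have k: "k > 0" "\<bar>c\<bar> \<le> k" unfolding k_def by auto
  have "- (t^2 * \<bar>c\<bar>) \<le> t^2 * c"
    using mult_left_mono[of "- \<bar>c\<bar>" c "t^2"] by simp
  moreover have "t^2 * \<bar>c\<bar> \<le> a^2 / k"
  proof -
    have "t^2 * \<bar>c\<bar> = a^2 * \<bar>c\<bar> / k^2" unfolding t_def by (simp add: power_divide)
    also have "\<dots> \<le> a^2 * k / k^2" using k by (intro divide_right_mono mult_left_mono) auto
    also have "\<dots> = a^2 / k" using k by (simp add: power2_eq_square)
    finally show ?thesis .
  qed
  moreover have "2 * t * a = 2 * (a^2 / k)" unfolding t_def by (simp add: power2_eq_square)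
  moreover have "a^2 / k > 0" using a k by simp
  ultimately have "2 * t * a + t^2 * c > 0" by linarith
  then show False using assms[of t] by simp
qed

text \<open>The first variation of x \<mapsto> \<mu> (x \<bullet> A x) - x \<bullet> B x vanishes at its minimum point z.\<close>
lemma max_ratio_gen_eigenvector:
  fixes A B :: "real mat"
  assumes A: "A \<in> carrier_mat n n" "sym_mat A" and B: "B \<in> carrier_mat n n" "sym_mat B"
    and le: "\<And>x. x \<in> carrier_vec n \<Longrightarrow> x \<bullet> (B *\<^sub>v x) \<le> \<mu> * (x \<bullet> (A *\<^sub>v x))"
    and z: "z \<in> carrier_vec n" and eq: "z \<bullet> (B *\<^sub>v z) = \<mu> * (z \<bullet> (A *\<^sub>v z))"
  shows "B *\<^sub>v z = \<mu> \<cdot>\<^sub>v (A *\<^sub>v z)"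
proof -
  define w where "w = B *\<^sub>v z - \<mu> \<cdot>\<^sub>v (A *\<^sub>v z)"
  have w: "w \<in> carrier_vec n" unfolding w_def using A B z by auto
  have ww: "w \<bullet> w = w \<bullet> (B *\<^sub>v z) - \<mu> * (w \<bullet> (A *\<^sub>v z))"
    unfolding w_def using A B z by (simp add: scalar_prod_minus_distrib[of _ n])
  have "2 * t * (w \<bullet> w) + t^2 * (w \<bullet> (B *\<^sub>v w) - \<mu> * (w \<bullet> (A *\<^sub>v w))) \<le> 0" for t
    using le[of "z + t \<cdot>\<^sub>v w"] z w eq
    unfolding quadratic_form_add_smult[OF A z w] quadratic_form_add_smult[OF B z w] ww
    by (simp add: algebra_simps)
  then have "w \<bullet> w = 0" by (rule linear_term_eq_0_if_nonpos)
  then have w0: "w = 0\<^sub>v n" using scalar_prod_self_eq_0[OF w] by simp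
  show ?thesis
  proof (rule eq_vecI)
    fix i assume "i < dim_vec (\<mu> \<cdot>\<^sub>v (A *\<^sub>v z))"
    then have i: "i < n" using A by simp
    then have "w $ i = 0" using w0 by simp
    then show "(B *\<^sub>v z) $ i = (\<mu> \<cdot>\<^sub>v (A *\<^sub>v z)) $ i" using i A B z unfolding w_def by simp
  qed (use A B in simp)
qed

lemma rayleigh_max_gen_eigenvalue:
  assumes M: "pos_def_mat n M" and K: "K \<in> carrier_mat n n" "sym_mat K" and n: "n > 0"
  shows "\<exists>\<mu>\<in>gen_eigenvalues K M. \<forall>x\<in>carrier_vec n. x \<bullet> (K *\<^sub>v x) \<le> \<mu> * (x \<bullet> (M *\<^sub>v x))"
proof -
  have Mc: "M \<in> carrier_mat n n" "sym_mat M" using M unfolding pos_def_mat_def by auto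
  have Mpos: "\<And>x. x \<in> carrier_vec n \<Longrightarrow> x \<noteq> 0\<^sub>v n \<Longrightarrow> x \<bullet> (M *\<^sub>v x) > 0"
    using M unfolding pos_def_mat_def by auto
  define R where "R x = (x \<bullet> (K *\<^sub>v x)) / (x \<bullet> (M *\<^sub>v x))" for x
  have "continuous_on (coord_sphere n) (\<lambda>x. - R (vec n x))"
    unfolding R_def
  proof (intro continuous_intros continuous_on_quadratic_form[OF K(1)]
      continuous_on_quadratic_form[OF Mc(1)] ballI)
    fix x assume "x \<in> coord_sphere n"
    then have "vec n x \<noteq> 0\<^sub>v n" using coord_sphere_vec by fastforce
    then show "vec n x \<bullet> (M *\<^sub>v vec n x) \<noteq> 0" using Mpos[of "vec n x"] by auto
  qed
  moreover have "- R (a \<cdot>\<^sub>v x) = - R x" if "x \<in> carrier_vec n" "a \<noteq> 0" for x a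
    unfolding R_def quadratic_form_smult[OF K(1) that(1)] quadratic_form_smult[OF Mc(1) that(1)]
    using that(2) by simp
  ultimately obtain z where z: "z \<in> carrier_vec n" "z \<noteq> 0\<^sub>v n"
    and max: "\<And>x. x \<in> carrier_vec n \<Longrightarrow> x \<noteq> 0\<^sub>v n \<Longrightarrow> R x \<le> R z"
    using scale_invariant_attains_min[OF n, of "\<lambda>x. - R x"] by force
  have le: "x \<bullet> (K *\<^sub>v x) \<le> R z * (x \<bullet> (M *\<^sub>v x))" if x: "x \<in> carrier_vec n" for x
  proof (cases "x = 0\<^sub>v n")
    case True then show ?thesis using K Mc by simp
  next
    case False
    then show ?thesis using max[OF x False] Mpos[OF x False] by (simp add: R_def divide_le_eq)
  qed
  have "z \<bullet> (K *\<^sub>v z) = R z * (z \<bullet> (M *\<^sub>v z))" using Mpos[OF z] by (simp add: R_def)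
  then have "K *\<^sub>v z = R z \<cdot>\<^sub>v (M *\<^sub>v z)" using max_ratio_gen_eigenvector[OF Mc K le z(1)] by blast
  then have "R z \<in> gen_eigenvalues K M" unfolding gen_eigenvalues_def using z K by auto
  then show ?thesis using le by blast
qed

lemma quadratic_form_le_omega_max:
  assumes M: "pos_def_mat n M" and K: "K \<in> carrier_mat n n" "sym_mat K" and x: "x \<in> carrier_vec n"
  shows "x \<bullet> (K *\<^sub>v x) \<le> omega_max K M * (x \<bullet> (M *\<^sub>v x))"
proof (cases "n = 0")
  case True
  then show ?thesis using M K x by (simp add: scalar_prod_def pos_def_mat_def)
next
  case False
  obtain \<mu> where \<mu>: "\<mu> \<in> gen_eigenvalues K M" and le: "x \<bullet> (K *\<^sub>v x) \<le> \<mu> * (x \<bullet> (M *\<^sub>v x))"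
    using rayleigh_max_gen_eigenvalue[OF M K] False x by blast
  have "\<mu> \<le> omega_max K M"
    unfolding omega_max_def using \<mu> finite_gen_eigenvalues[OF M K(1)] by simp
  then show ?thesis using le pos_def_mat_nonneg[OF M x] by (meson mult_right_mono order_trans)
qed

section \<open>Full row rank\<close>

context vec_space
begin

lemma full_dim_span_orthogonal_self_zero:
  assumes Sc: "Sc \<subseteq> carrier_vec n" "finite Sc"
    and d: "vectorspace.dim class_ring (span_vs Sc) = n"
    and x: "x \<in> carrier_vec n"
    and orth: "\<forall>c\<in>Sc. c \<bullet> x = 0"
  shows "x \<bullet> x = 0"
proof -
  obtain U where U: "finite U" "maximal U (\<lambda>T. T \<subseteq> Sc \<and> lin_indpt T)"
    using maximal_exists_superset[of Sc "\<lambda>T. T \<subseteq> Sc \<and> lin_indpt T" "{}"] Sc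
    by (auto simp: lin_dep_def)
  have UP: "U \<subseteq> Sc" "lin_indpt U" using U(2) unfolding maximal_def by auto
  have "card U = n" using dim_span[OF Sc U(2)] d by simp
  then have "basis U"
    by (intro dim_li_is_basis) (use fin_dim U(1) UP Sc dim_is_n in auto)
  then have "x \<in> span Sc"
    using span_is_monotone[OF UP(1)] x unfolding basis_def by auto
  then obtain a A where A: "x = lincomb a A" "finite A" "A \<subseteq> Sc"
    unfolding span_def by auto
  have Ac: "A \<subseteq> carrier_vec n" using A Sc by auto
  have "x \<bullet> x = (\<Sum>i<n. x $ i * (\<Sum>u\<in>A. a u * u $ i))"
    by (subst scalar_prod_eq_sum[OF x x], intro sum.cong refl)
      (subst (2) A(1), simp add: lincomb_index[OF _ Ac])
  also have "\<dots> = (\<Sum>u\<in>A. a u * (\<Sum>i<n. u $ i * x $ i))"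
    by (simp add: sum_distrib_left sum_distrib_right ac_simps) (rule sum.swap)
  also have "\<dots> = (\<Sum>u\<in>A. a u * (u \<bullet> x))"
    using Ac x by (intro sum.cong refl) (simp add: scalar_prod_eq_sum[of _ n] subsetD)
  also have "\<dots> = 0" using orth A(3) by (auto intro!: sum.neutral)
  finally show ?thesis .
qed

end

lemma foldr_append_rows_kernel:
  fixes C :: "nat \<Rightarrow> real mat" and x :: "real vec"
  assumes "\<forall>i\<in>set l. C i \<in> carrier_mat p (m i)" and x: "x \<in> carrier_vec p"
  defines "T \<equiv> foldr (\<lambda>i A. transpose_mat (C i) @\<^sub>r A) l (0\<^sub>m 0 p)"
  shows "T \<in> carrier_mat (sum_list (map m l)) p
    \<and> ((\<forall>i\<in>set l. transpose_mat (C i) *\<^sub>v x = 0\<^sub>v (m i)) \<longrightarrow> T *\<^sub>v x = 0\<^sub>v (sum_list (map m l)))"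
  using assms(1) unfolding T_def
proof (induction l)
  case Nil
  show ?case using x by auto
next
  case (Cons a l)
  let ?T = "foldr (\<lambda>i A. transpose_mat (C i) @\<^sub>r A) l (0\<^sub>m 0 p)"
  have IH: "?T \<in> carrier_mat (sum_list (map m l)) p"
    "(\<forall>i\<in>set l. transpose_mat (C i) *\<^sub>v x = 0\<^sub>v (m i)) \<longrightarrow> ?T *\<^sub>v x = 0\<^sub>v (sum_list (map m l))"
    using Cons by auto
  have Ca: "transpose_mat (C a) \<in> carrier_mat (m a) p" using Cons.prems by auto
  have "(transpose_mat (C a) @\<^sub>r ?T) *\<^sub>v x = (transpose_mat (C a) *\<^sub>v x) @\<^sub>v (?T *\<^sub>v x)"
    using mat_mult_append[OF Ca IH(1) x] by simp
  moreover have "0\<^sub>v (m a) @\<^sub>v 0\<^sub>v (sum_list (map m l)) = (0\<^sub>v (sum_list (map m (a # l))) :: real vec)"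
    by (intro eq_vecI) (auto simp: append_vec_def Let_def)
  ultimately show ?case using IH Ca by auto
qed

lemma block_row_full_rank_kernel:
  fixes C :: "nat \<Rightarrow> real mat"
  assumes C: "\<forall>i<S. C i \<in> carrier_mat p (m i)" and r: "vec_space.rank p (block_row p C S) = p"
    and x: "x \<in> carrier_vec p" and z: "\<forall>i<S. transpose_mat (C i) *\<^sub>v x = 0\<^sub>v (m i)"
  shows "x = 0\<^sub>v p"
proof -
  define T where "T = foldr (\<lambda>i A. transpose_mat (C i) @\<^sub>r A) [0..<S] (0\<^sub>m 0 p)"
  have T: "T \<in> carrier_mat (sum_list (map m [0..<S])) p" "T *\<^sub>v x = 0\<^sub>v (sum_list (map m [0..<S]))"
    using foldr_append_rows_kernel[of "[0..<S]" C p m x] C x z unfolding T_def by auto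
  have cols: "set (cols (block_row p C S)) = set (rows T)"
    unfolding block_row_def T_def cols_transpose ..
  have "x \<bullet> x = 0"
  proof (rule vec_space.full_dim_span_orthogonal_self_zero[OF _ _ _ x])
    show "set (cols (block_row p C S)) \<subseteq> carrier_vec p"
      unfolding cols using rows_carrier[of T] T(1) by simp
    show "\<forall>c\<in>set (cols (block_row p C S)). c \<bullet> x = 0"
    proof
      fix c assume "c \<in> set (cols (block_row p C S))"
      then obtain j where j: "j < dim_row T" "c = row T j" unfolding cols rows_def by auto
      then have "c \<bullet> x = (T *\<^sub>v x) $ j" by simp
      then show "c \<bullet> x = 0" using T j by simp
    qed
  qed (use r in \<open>simp_all add: vec_space.rank_def\<close>)
  then show ?thesis using scalar_prod_self_eq_0[OF x] by simp
qed

lemma block_row_full_rank_coercive: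
  fixes C :: "nat \<Rightarrow> real mat"
  assumes C: "\<forall>i<S. C i \<in> carrier_mat p (m i)" and r: "vec_space.rank p (block_row p C S) = p"
  shows "\<exists>c>0. \<forall>x\<in>carrier_vec p.
    c * (x \<bullet> x) \<le> (\<Sum>i<S. (transpose_mat (C i) *\<^sub>v x) \<bullet> (transpose_mat (C i) *\<^sub>v x))"
proof (rule positive_quadratic_coercive)
  have "(\<Sum>i<S. (transpose_mat (C i) *\<^sub>v vec p x) \<bullet> (transpose_mat (C i) *\<^sub>v vec p x))
     = (\<Sum>i<S. \<Sum>j<m i. (\<Sum>k<p. C i $$ (k,j) * x k) * (\<Sum>k<p. C i $$ (k,j) * x k))" for x
  proof (intro sum.cong refl)
    fix i assume "i \<in> {..<S}"
    then have Ci: "transpose_mat (C i) \<in> carrier_mat (m i) p" using C by auto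
    then show "(transpose_mat (C i) *\<^sub>v vec p x) \<bullet> (transpose_mat (C i) *\<^sub>v vec p x)
       = (\<Sum>j<m i. (\<Sum>k<p. C i $$ (k,j) * x k) * (\<Sum>k<p. C i $$ (k,j) * x k))"
      by (subst scalar_prod_eq_sum[of _ "m i"]) (auto intro!: sum.cong simp: scalar_prod_eq_sum[of _ p])
  qed
  then show "continuous_on (coord_sphere p)
      (\<lambda>x. \<Sum>i<S. (transpose_mat (C i) *\<^sub>v vec p x) \<bullet> (transpose_mat (C i) *\<^sub>v vec p x))"
    by (simp only:) (intro continuous_intros continuous_on_subset[OF continuous_on_product_coordinates], auto)
next
  fix x :: "real vec" and a assume x: "x \<in> carrier_vec p"
  have "transpose_mat (C i) *\<^sub>v (a \<cdot>\<^sub>v x) = a \<cdot>\<^sub>v (transpose_mat (C i) *\<^sub>v x)" if "i < S" for i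
    using C that x by (intro mult_mat_vec) auto
  then show "(\<Sum>i<S. (transpose_mat (C i) *\<^sub>v (a \<cdot>\<^sub>v x)) \<bullet> (transpose_mat (C i) *\<^sub>v (a \<cdot>\<^sub>v x)))
      = a^2 * (\<Sum>i<S. (transpose_mat (C i) *\<^sub>v x) \<bullet> (transpose_mat (C i) *\<^sub>v x))"
    using C x by (simp add: sum_distrib_left power2_eq_square mult.assoc)
next
  fix x :: "real vec" assume x: "x \<in> carrier_vec p" and nz: "x \<noteq> 0\<^sub>v p"
  then obtain i where i: "i < S" "transpose_mat (C i) *\<^sub>v x \<noteq> 0\<^sub>v (m i)"
    using block_row_full_rank_kernel[OF C r x] by blast
  have "transpose_mat (C i) *\<^sub>v x \<in> carrier_vec (m i)" using C i x by auto
  then have "(transpose_mat (C i) *\<^sub>v x) \<bullet> (transpose_mat (C i) *\<^sub>v x) > 0"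
    using i(2) scalar_prod_self_eq_0 scalar_prod_self_nonneg by (metis order_le_less)
  then show "0 < (\<Sum>i<S. (transpose_mat (C i) *\<^sub>v x) \<bullet> (transpose_mat (C i) *\<^sub>v x))"
    using i(1) by (intro sum_pos2[of "{..<S}" i]) (auto simp: scalar_prod_self_nonneg)
qed

lemma vnorm_eq_L2_set:
  assumes "x \<in> carrier_vec n"
  shows "vnorm x = L2_set (\<lambda>j. x $ j) {..<n}"
  unfolding vnorm_def L2_set_def using scalar_prod_eq_sum[OF assms assms] by (simp add: power2_eq_square)

lemma vnorm_nonneg: "vnorm x \<ge> 0"
  unfolding vnorm_def using scalar_prod_self_nonneg[of x] by simp

lemma vnorm_power2: "(vnorm x)^2 = x \<bullet> x"
  unfolding vnorm_def using scalar_prod_self_nonneg[of x] by simp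

lemma vnorm_triangle:
  assumes "x \<in> carrier_vec n" "y \<in> carrier_vec n"
  shows "vnorm (x + y) \<le> vnorm x + vnorm y"
proof -
  have "vnorm (x + y) = L2_set (\<lambda>j. x $ j + y $ j) {..<n}"
    using assms by (subst vnorm_eq_L2_set[of _ n]) (auto intro!: L2_set_cong)
  also have "\<dots> \<le> L2_set (\<lambda>j. x $ j) {..<n} + L2_set (\<lambda>j. y $ j) {..<n}"
    by (rule L2_set_triangle_ineq)
  finally show ?thesis using assms by (simp add: vnorm_eq_L2_set)
qed

lemma vnorm_smult:
  assumes "x \<in> carrier_vec n"
  shows "vnorm (c \<cdot>\<^sub>v x) = \<bar>c\<bar> * vnorm x"
  unfolding vnorm_def scalar_prod_smult_self[OF assms] by (simp add: real_sqrt_mult)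

lemma vnorm_diff_le:
  assumes "x \<in> carrier_vec n" "y \<in> carrier_vec n"
  shows "vnorm (x - y) \<le> vnorm x + vnorm y"
proof -
  have "x - y = x + (-1) \<cdot>\<^sub>v y" using assms by (intro eq_vecI) auto
  then show ?thesis using vnorm_triangle[OF assms(1), of "(-1) \<cdot>\<^sub>v y"] vnorm_smult[OF assms(2), of "-1"] assms
    by simp
qed

definition frobenius_norm :: "real mat \<Rightarrow> real" where
  "frobenius_norm A = sqrt (\<Sum>k<dim_row A. \<Sum>j<dim_col A. (A $$ (k,j))^2)"

lemma frobenius_norm_nonneg: "frobenius_norm A \<ge> 0"
  unfolding frobenius_norm_def by (simp add: sum_nonneg)

lemma vnorm_mult_mat_vec_le:
  fixes A :: "real mat"
  assumes A: "A \<in> carrier_mat nr nc" and x: "x \<in> carrier_vec nc"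
  shows "vnorm (A *\<^sub>v x) \<le> frobenius_norm A * vnorm x"
proof -
  have row: "((A *\<^sub>v x) $ k)^2 \<le> (\<Sum>j<nc. (A $$ (k,j))^2) * (x \<bullet> x)" if k: "k < nr" for k
  proof -
    have "\<bar>(A *\<^sub>v x) $ k\<bar> \<le> (\<Sum>j<nc. \<bar>A $$ (k,j)\<bar> * \<bar>x $ j\<bar>)"
      unfolding mult_mat_vec_index_sum[OF A x k] by (rule order_trans[OF sum_abs]) (simp add: abs_mult)
    also have "\<dots> \<le> L2_set (\<lambda>j. A $$ (k,j)) {..<nc} * vnorm x"
      unfolding vnorm_eq_L2_set[OF x] by (rule L2_set_mult_ineq)
    finally have "\<bar>(A *\<^sub>v x) $ k\<bar>^2 \<le> (L2_set (\<lambda>j. A $$ (k,j)) {..<nc} * vnorm x)^2"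
      by (intro power_mono) auto
    then show ?thesis
      unfolding power_mult_distrib vnorm_power2 L2_set_def by (simp add: sum_nonneg)
  qed
  have Ax: "A *\<^sub>v x \<in> carrier_vec nr" using A x by auto
  have "(vnorm (A *\<^sub>v x))^2 = (\<Sum>k<nr. ((A *\<^sub>v x) $ k)^2)"
    using vnorm_power2 scalar_prod_eq_sum[OF Ax Ax] by (simp add: power2_eq_square)
  also have "\<dots> \<le> (\<Sum>k<nr. (\<Sum>j<nc. (A $$ (k,j))^2) * (x \<bullet> x))"
    by (intro sum_mono row) auto
  also have "\<dots> = (frobenius_norm A * vnorm x)^2"
    unfolding frobenius_norm_def power_mult_distrib vnorm_power2
    using A by (simp add: sum_distrib_right sum_nonneg)
  finally show ?thesis using frobenius_norm_nonneg vnorm_nonneg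
    by (meson mult_nonneg_nonneg power2_le_imp_le)
qed

lemma bounded_seq_iff: "bounded_seq X \<longleftrightarrow> (\<exists>B. \<forall>n. vnorm (X n) \<le> B)"
  unfolding bounded_seq_def by (meson gt_ex less_eq_real_def order.strict_trans1)

lemma vsum_carrier: "vsum p F I \<in> carrier_vec p"
  unfolding vsum_def by simp

lemma index_vsum: "k < p \<Longrightarrow> vsum p F I $ k = (\<Sum>i\<in>I. F i $ k)"
  unfolding vsum_def by simp

lemma scalar_prod_vsum:
  assumes w: "w \<in> carrier_vec p" and F: "\<And>i. i \<in> I \<Longrightarrow> F i \<in> carrier_vec p"
  shows "w \<bullet> vsum p F I = (\<Sum>i\<in>I. w \<bullet> F i)"
proof -
  have "w \<bullet> vsum p F I = (\<Sum>k<p. w $ k * (\<Sum>i\<in>I. F i $ k))"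
    using scalar_prod_eq_sum[OF w vsum_carrier] by (simp add: index_vsum)
  also have "\<dots> = (\<Sum>i\<in>I. \<Sum>k<p. w $ k * F i $ k)"
    by (simp add: sum_distrib_left) (rule sum.swap)
  also have "\<dots> = (\<Sum>i\<in>I. w \<bullet> F i)"
    using F w by (intro sum.cong refl) (simp add: scalar_prod_eq_sum[of _ p])
  finally show ?thesis .
qed

section \<open>Energy decay of the Newmark method with homogeneous constraints\<close>

lemma newmark_step_variation:
  fixes M K C :: "real mat"
  assumes M: "M \<in> carrier_mat n n" and K: "K \<in> carrier_mat n n" and C: "C \<in> carrier_mat p n"
    and fa: "fa \<in> carrier_vec n" and fb: "fb \<in> carrier_vec n"
    and ea: "ea \<in> carrier_vec n" and eb: "eb \<in> carrier_vec n"
    and la: "la \<in> carrier_vec p" and lb: "lb \<in> carrier_vec p"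
    and ma: "M *\<^sub>v fa + K *\<^sub>v ea = transpose_mat C *\<^sub>v la"
    and mb: "M *\<^sub>v fb + K *\<^sub>v eb = transpose_mat C *\<^sub>v lb"
    and up: "eb = ea + dt \<cdot>\<^sub>v ((1 - g) \<cdot>\<^sub>v fa + g \<cdot>\<^sub>v fb)"
    and x: "x \<in> carrier_vec n"
  shows "x \<bullet> (M *\<^sub>v fb) - x \<bullet> (M *\<^sub>v fa)
    = (lb \<bullet> (C *\<^sub>v x) - la \<bullet> (C *\<^sub>v x)) - dt * ((1 - g) * (x \<bullet> (K *\<^sub>v fa)) + g * (x \<bullet> (K *\<^sub>v fb)))"
proof -
  have a: "x \<bullet> (M *\<^sub>v fa) + x \<bullet> (K *\<^sub>v ea) = la \<bullet> (C *\<^sub>v x)"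
    using arg_cong[OF ma, of "\<lambda>z. x \<bullet> z"] M K C fa ea la x
    by (simp add: scalar_prod_add_distrib[of _ n] transpose_mult_mat_vec_scalar_prod)
  have b: "x \<bullet> (M *\<^sub>v fb) + x \<bullet> (K *\<^sub>v eb) = lb \<bullet> (C *\<^sub>v x)"
    using arg_cong[OF mb, of "\<lambda>z. x \<bullet> z"] M K C fb eb lb x
    by (simp add: scalar_prod_add_distrib[of _ n] transpose_mult_mat_vec_scalar_prod)
  have "x \<bullet> (K *\<^sub>v eb) = x \<bullet> (K *\<^sub>v ea) + dt * (x \<bullet> (K *\<^sub>v ((1 - g) \<cdot>\<^sub>v fa + g \<cdot>\<^sub>v fb)))"
    unfolding up using K ea fa fb x
    by (simp add: mult_add_distrib_mat_vec[of K n n] mult_mat_vec[of K n n] scalar_prod_add_distrib[of _ n])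
  also have "x \<bullet> (K *\<^sub>v ((1 - g) \<cdot>\<^sub>v fa + g \<cdot>\<^sub>v fb)) = (1 - g) * (x \<bullet> (K *\<^sub>v fa)) + g * (x \<bullet> (K *\<^sub>v fb))"
    by (rule bilinear_form_lincomb[OF K fa fb x])
  finally show ?thesis using a b by linarith
qed

text \<open>Write fb + fa = 2 u + (1 - 2 g) \<delta> and test the variation with u and with \<delta>.\<close>
lemma newmark_step_energy:
  fixes M K C :: "real mat"
  assumes M: "M \<in> carrier_mat n n" "sym_mat M" and K: "K \<in> carrier_mat n n" "sym_mat K"
    and C: "C \<in> carrier_mat p n"
    and fa: "fa \<in> carrier_vec n" and fb: "fb \<in> carrier_vec n"
    and ea: "ea \<in> carrier_vec n" and eb: "eb \<in> carrier_vec n"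
    and la: "la \<in> carrier_vec p" and lb: "lb \<in> carrier_vec p"
    and ma: "M *\<^sub>v fa + K *\<^sub>v ea = transpose_mat C *\<^sub>v la"
    and mb: "M *\<^sub>v fb + K *\<^sub>v eb = transpose_mat C *\<^sub>v lb"
    and up: "eb = ea + dt \<cdot>\<^sub>v ((1 - g) \<cdot>\<^sub>v fa + g \<cdot>\<^sub>v fb)"
  defines "qa \<equiv> lb \<bullet> (C *\<^sub>v fa) - la \<bullet> (C *\<^sub>v fa)"
    and "qb \<equiv> lb \<bullet> (C *\<^sub>v fb) - la \<bullet> (C *\<^sub>v fb)"
    and "u \<equiv> (1 - g) \<cdot>\<^sub>v fa + g \<cdot>\<^sub>v fb"
    and "\<delta> \<equiv> (-1) \<cdot>\<^sub>v fa + 1 \<cdot>\<^sub>v fb"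
  shows "fb \<bullet> (M *\<^sub>v fb) - fa \<bullet> (M *\<^sub>v fa)
      = 2 * ((1 - g) * qa + g * qb - dt * (u \<bullet> (K *\<^sub>v u))) + (1 - 2*g) * (\<delta> \<bullet> (M *\<^sub>v \<delta>))"
    and "\<delta> \<bullet> (M *\<^sub>v \<delta>) = qb - qa - dt * (\<delta> \<bullet> (K *\<^sub>v u))"
proof -
  note var = newmark_step_variation[OF M(1) K(1) C fa fb ea eb la lb ma mb up]
  have Ra: "fa \<bullet> (M *\<^sub>v fb) - fa \<bullet> (M *\<^sub>v fa)
      = qa - dt * ((1 - g) * (fa \<bullet> (K *\<^sub>v fa)) + g * (fa \<bullet> (K *\<^sub>v fb)))"
    using var[OF fa] unfolding qa_def .
  have Rb: "fb \<bullet> (M *\<^sub>v fb) - fa \<bullet> (M *\<^sub>v fb)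
      = qb - dt * ((1 - g) * (fa \<bullet> (K *\<^sub>v fb)) + g * (fb \<bullet> (K *\<^sub>v fb)))"
    using var[OF fb] sym_mat_scalar_prod_swap[OF M fa fb] sym_mat_scalar_prod_swap[OF K fa fb]
    unfolding qb_def by simp
  have D: "\<delta> \<bullet> (M *\<^sub>v \<delta>) = fb \<bullet> (M *\<^sub>v fb) - 2 * (fa \<bullet> (M *\<^sub>v fb)) + fa \<bullet> (M *\<^sub>v fa)"
    unfolding \<delta>_def bilinear_form_lincomb2[OF M(1) fa fb] using sym_mat_scalar_prod_swap[OF M fa fb] by simp
  have a: "u \<bullet> (K *\<^sub>v u) = (1-g)^2 * (fa \<bullet> (K *\<^sub>v fa)) + 2*g*(1-g) * (fa \<bullet> (K *\<^sub>v fb))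
      + g^2 * (fb \<bullet> (K *\<^sub>v fb))"
    unfolding u_def bilinear_form_lincomb2[OF K(1) fa fb] using sym_mat_scalar_prod_swap[OF K fa fb]
    by (simp add: power2_eq_square algebra_simps)
  have c: "\<delta> \<bullet> (K *\<^sub>v u) = (1-g) * (fa \<bullet> (K *\<^sub>v fb) - fa \<bullet> (K *\<^sub>v fa))
      + g * (fb \<bullet> (K *\<^sub>v fb) - fa \<bullet> (K *\<^sub>v fb))"
    unfolding u_def \<delta>_def bilinear_form_lincomb2[OF K(1) fa fb] using sym_mat_scalar_prod_swap[OF K fa fb]
    by (simp add: algebra_simps)
  show "\<delta> \<bullet> (M *\<^sub>v \<delta>) = qb - qa - dt * (\<delta> \<bullet> (K *\<^sub>v u))"
    unfolding D c using Ra Rb by (simp add: algebra_simps)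
  show "fb \<bullet> (M *\<^sub>v fb) - fa \<bullet> (M *\<^sub>v fa)
      = 2 * ((1 - g) * qa + g * qb - dt * (u \<bullet> (K *\<^sub>v u))) + (1 - 2*g) * (\<delta> \<bullet> (M *\<^sub>v \<delta>))"
  proof -
    have qab: "qa = fa \<bullet> (M *\<^sub>v fb) - fa \<bullet> (M *\<^sub>v fa) + dt * ((1 - g) * (fa \<bullet> (K *\<^sub>v fa)) + g * (fa \<bullet> (K *\<^sub>v fb)))"
      "qb = fb \<bullet> (M *\<^sub>v fb) - fa \<bullet> (M *\<^sub>v fb) + dt * ((1 - g) * (fa \<bullet> (K *\<^sub>v fb)) + g * (fb \<bullet> (K *\<^sub>v fb)))"
      using Ra Rb by simp_all
    show ?thesis unfolding D a qab by (simp add: algebra_simps power2_eq_square)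
  qed
qed

text \<open>The interface terms qa, qb cancel in the sum over the subsystems. For g < 1/2 the
  dissipation 2 dt a dominates (1 - 2g) D: use the cross-term bound with t = 1/2 - g together
  with the time-step bound dt b \<le> 2 D / (1 - 2g).\<close>
lemma newmark_energy_sum_nonpos:
  fixes \<Delta>E D a b c qa qb :: "nat \<Rightarrow> real" and I :: "nat set" and g dt :: real
  assumes step: "\<And>i. i \<in> I \<Longrightarrow> \<Delta>E i = 2 * ((1 - g) * qa i + g * qb i - dt * a i) + (1 - 2*g) * D i"
    and diff: "\<And>i. i \<in> I \<Longrightarrow> D i = qb i - qa i - dt * c i"
    and nonneg: "\<And>i. i \<in> I \<Longrightarrow> a i \<ge> 0 \<and> D i \<ge> 0"
    and cross: "\<And>i t. i \<in> I \<Longrightarrow> t > 0 \<Longrightarrow> - 2 * c i \<le> t * b i + a i / t"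
    and "sum qa I = 0" "sum qb I = 0" and dt: "dt > 0"
    and stab: "1/2 \<le> g \<or> (g < 1/2 \<and> (\<forall>i\<in>I. dt * b i \<le> 2 / (1 - 2*g) * D i))"
  shows "sum \<Delta>E I \<le> 0"
proof -
  have "sum \<Delta>E I = (\<Sum>i\<in>I. 2 * (1 - g) * qa i + 2 * g * qb i - 2 * dt * a i + (1 - 2*g) * D i)"
    using step by (intro sum.cong) (auto simp: algebra_simps)
  also have "\<dots> = 2 * (1 - g) * sum qa I + 2 * g * sum qb I - 2 * dt * sum a I + (1 - 2*g) * sum D I"
    by (simp add: sum.distrib sum_subtractf sum_distrib_left)
  finally have sum_step: "sum \<Delta>E I = - 2 * dt * sum a I + (1 - 2*g) * sum D I"
    using assms(5,6) by simp
  have "sum D I = (\<Sum>i\<in>I. qb i - qa i - dt * c i)" using diff by (intro sum.cong) auto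
  also have "\<dots> = sum qb I - sum qa I - dt * sum c I" by (simp add: sum_subtractf sum_distrib_left)
  finally have sum_diff: "sum D I = - dt * sum c I" using assms(5,6) by simp
  have "sum a I \<ge> 0" "sum D I \<ge> 0" using nonneg by (auto intro: sum_nonneg)
  show ?thesis
  proof (cases "1/2 \<le> g")
    case True
    then have "(1 - 2*g) * sum D I \<le> 0" using \<open>sum D I \<ge> 0\<close> by (simp add: mult_nonpos_nonneg)
    moreover have "0 \<le> dt * sum a I" using \<open>sum a I \<ge> 0\<close> dt by simp
    ultimately show ?thesis using sum_step by linarith
  next
    case False
    define s where "s = 1/2 - g"
    have s: "s > 0" "2 / (1 - 2*g) = 1 / s" using False unfolding s_def by (auto simp: field_simps)
    have cross_sum: "- 2 * sum c I \<le> s * sum b I + sum a I / s"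
      using sum_mono[of I "\<lambda>i. - 2 * c i" "\<lambda>i. s * b i + a i / s"] cross s
      by (simp add: sum.distrib sum_distrib_left sum_divide_distrib)
    have "(\<Sum>i\<in>I. dt * b i) \<le> (\<Sum>i\<in>I. D i / s)"
      using stab False s by (intro sum_mono) auto
    then have step_bound: "dt * sum b I \<le> sum D I / s"
      by (simp add: sum_distrib_left[symmetric] sum_divide_distrib[symmetric])
    have "2 * sum D I = dt * (- 2 * sum c I)" using sum_diff by simp
    also have "\<dots> \<le> dt * (s * sum b I + sum a I / s)"
      using cross_sum dt by (intro mult_left_mono) auto
    also have "\<dots> = s * (dt * sum b I) + dt * sum a I / s" by (simp add: algebra_simps)
    also have "\<dots> \<le> s * (sum D I / s) + dt * sum a I / s"
      using step_bound s by (intro add_right_mono mult_left_mono) auto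
    also have "s * (sum D I / s) = sum D I" using s by simp
    finally have "s * sum D I \<le> dt * sum a I" using s by (simp add: field_simps)
    then show ?thesis using sum_step unfolding s_def by (simp add: algebra_simps)
  qed
qed

locale newmark_subsystems =
  fixes S p :: nat and m :: "nat \<Rightarrow> nat" and M K C :: "nat \<Rightarrow> real mat"
  assumes M_spd: "\<forall>i<S. pos_def_mat (m i) (M i)"
    and K_spsd: "\<forall>i<S. pos_semidef_mat (m i) (K i)"
    and C_dim: "\<forall>i<S. C i \<in> carrier_mat p (m i)"
begin

lemma M_carrier [simp]: "i < S \<Longrightarrow> M i \<in> carrier_mat (m i) (m i)"
  and M_sym: "i < S \<Longrightarrow> sym_mat (M i)"
  using M_spd unfolding pos_def_mat_def by auto

lemma K_carrier [simp]: "i < S \<Longrightarrow> K i \<in> carrier_mat (m i) (m i)"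
  and K_sym: "i < S \<Longrightarrow> sym_mat (K i)"
  and K_nonneg: "i < S \<Longrightarrow> x \<in> carrier_vec (m i) \<Longrightarrow> x \<bullet> (K i *\<^sub>v x) \<ge> 0"
  using K_spsd unfolding pos_semidef_mat_def by auto

lemma C_carrier [simp]: "i < S \<Longrightarrow> C i \<in> carrier_mat p (m i)"
  using C_dim by auto

lemma dim_subsystem_mats [simp]:
  "i < S \<Longrightarrow> dim_row (M i) = m i" "i < S \<Longrightarrow> dim_col (M i) = m i"
  "i < S \<Longrightarrow> dim_row (K i) = m i" "i < S \<Longrightarrow> dim_col (K i) = m i"
  "i < S \<Longrightarrow> dim_row (C i) = p" "i < S \<Longrightarrow> dim_col (C i) = m i"
  using M_carrier K_carrier C_carrier unfolding carrier_mat_def by auto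

definition energy :: "(nat \<Rightarrow> nat \<Rightarrow> real vec) \<Rightarrow> nat \<Rightarrow> real" where
  "energy f n = (\<Sum>i<S. f i n \<bullet> (M i *\<^sub>v f i n))"

end

locale homogeneous_newmark = newmark_subsystems +
  fixes \<gamma> \<Delta>t :: real and f e :: "nat \<Rightarrow> nat \<Rightarrow> real vec" and \<mu> :: "nat \<Rightarrow> real vec"
  assumes f_dim: "\<forall>i<S. \<forall>n. f i n \<in> carrier_vec (m i)"
    and e_dim: "\<forall>i<S. \<forall>n. e i n \<in> carrier_vec (m i)"
    and \<mu>_dim: "\<forall>n. \<mu> n \<in> carrier_vec p"
    and motion: "\<forall>n. \<forall>i<S. M i *\<^sub>v f i n + K i *\<^sub>v e i n = transpose_mat (C i) *\<^sub>v \<mu> n"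
    and constraint: "\<forall>n. vsum p (\<lambda>i. C i *\<^sub>v f i n) {..<S} = 0\<^sub>v p"
    and update: "\<forall>n. \<forall>i<S. e i (Suc n) = e i n + \<Delta>t \<cdot>\<^sub>v ((1 - \<gamma>) \<cdot>\<^sub>v f i n + \<gamma> \<cdot>\<^sub>v f i (Suc n))"
    and dt_pos: "\<Delta>t > 0"
    and stable: "1/2 \<le> \<gamma> \<or> (\<gamma> < 1/2 \<and> (\<forall>i<S. \<Delta>t * omega_max (K i) (M i) \<le> 2 / (1 - 2*\<gamma>)))"
begin

lemma f_carrier [simp]: "i < S \<Longrightarrow> f i n \<in> carrier_vec (m i)"
  and e_carrier [simp]: "i < S \<Longrightarrow> e i n \<in> carrier_vec (m i)"
  and \<mu>_carrier [simp]: "\<mu> n \<in> carrier_vec p"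
  using f_dim e_dim \<mu>_dim by auto

lemma motion_at: "i < S \<Longrightarrow> M i *\<^sub>v f i n + K i *\<^sub>v e i n = transpose_mat (C i) *\<^sub>v \<mu> n"
  and update_at: "i < S \<Longrightarrow> e i (Suc n) = e i n + \<Delta>t \<cdot>\<^sub>v ((1 - \<gamma>) \<cdot>\<^sub>v f i n + \<gamma> \<cdot>\<^sub>v f i (Suc n))"
  using motion update by auto

lemma constraint_orthogonal:
  assumes "w \<in> carrier_vec p"
  shows "(\<Sum>i<S. w \<bullet> (C i *\<^sub>v f i n)) = 0"
proof -
  have "(\<Sum>i<S. w \<bullet> (C i *\<^sub>v f i n)) = w \<bullet> vsum p (\<lambda>i. C i *\<^sub>v f i n) {..<S}"
    by (rule scalar_prod_vsum[symmetric, OF assms]) (use mult_mat_vec_carrier[OF C_carrier f_carrier] in blast)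
  then show ?thesis using constraint assms by simp
qed

lemma energy_Suc_le: "energy f (Suc n) \<le> energy f n"
proof -
  define u where "u i = (1 - \<gamma>) \<cdot>\<^sub>v f i n + \<gamma> \<cdot>\<^sub>v f i (Suc n)" for i
  define \<delta> where "\<delta> i = (-1) \<cdot>\<^sub>v f i n + 1 \<cdot>\<^sub>v f i (Suc n)" for i
  define qa where "qa i = \<mu> (Suc n) \<bullet> (C i *\<^sub>v f i n) - \<mu> n \<bullet> (C i *\<^sub>v f i n)" for i
  define qb where "qb i = \<mu> (Suc n) \<bullet> (C i *\<^sub>v f i (Suc n)) - \<mu> n \<bullet> (C i *\<^sub>v f i (Suc n))" for i
  have uc: "u i \<in> carrier_vec (m i)" and \<delta>c: "\<delta> i \<in> carrier_vec (m i)" if "i < S" for i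
    using that unfolding u_def \<delta>_def by auto
  have "(\<Sum>i<S. f i (Suc n) \<bullet> (M i *\<^sub>v f i (Suc n)) - f i n \<bullet> (M i *\<^sub>v f i n)) \<le> 0"
  proof (rule newmark_energy_sum_nonpos[where qa = qa and qb = qb and g = \<gamma> and dt = \<Delta>t
        and a = "\<lambda>i. u i \<bullet> (K i *\<^sub>v u i)" and D = "\<lambda>i. \<delta> i \<bullet> (M i *\<^sub>v \<delta> i)"
        and c = "\<lambda>i. \<delta> i \<bullet> (K i *\<^sub>v u i)" and b = "\<lambda>i. \<delta> i \<bullet> (K i *\<^sub>v \<delta> i)"])
    fix i assume "i \<in> {..<S}"
    then have i: "i < S" by simp
    note energy_step = newmark_step_energy[OF M_carrier[OF i] M_sym[OF i] K_carrier[OF i] K_sym[OF i]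
        C_carrier[OF i] f_carrier[OF i] f_carrier[OF i] e_carrier[OF i] e_carrier[OF i]
        \<mu>_carrier \<mu>_carrier motion_at[OF i] motion_at[OF i] update_at[OF i]]
    show "f i (Suc n) \<bullet> (M i *\<^sub>v f i (Suc n)) - f i n \<bullet> (M i *\<^sub>v f i n)
      = 2 * ((1 - \<gamma>) * qa i + \<gamma> * qb i - \<Delta>t * (u i \<bullet> (K i *\<^sub>v u i))) + (1 - 2*\<gamma>) * (\<delta> i \<bullet> (M i *\<^sub>v \<delta> i))"
      using energy_step(1) unfolding qa_def qb_def u_def \<delta>_def .
    show "\<delta> i \<bullet> (M i *\<^sub>v \<delta> i) = qb i - qa i - \<Delta>t * (\<delta> i \<bullet> (K i *\<^sub>v u i))"
      using energy_step(2) unfolding qa_def qb_def u_def \<delta>_def .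
    show "u i \<bullet> (K i *\<^sub>v u i) \<ge> 0 \<and> \<delta> i \<bullet> (M i *\<^sub>v \<delta> i) \<ge> 0"
      using K_nonneg[OF i uc[OF i]] pos_def_mat_nonneg[OF M_spd[rule_format, OF i] \<delta>c[OF i]] by simp
    show "- 2 * (\<delta> i \<bullet> (K i *\<^sub>v u i)) \<le> t * (\<delta> i \<bullet> (K i *\<^sub>v \<delta> i)) + u i \<bullet> (K i *\<^sub>v u i) / t"
      if "t > 0" for t
      by (rule pos_semidef_mat_cross_term[OF K_spsd[rule_format, OF i] uc[OF i] \<delta>c[OF i] that])
  next
    show "sum qa {..<S} = 0" "sum qb {..<S} = 0"
      unfolding qa_def qb_def by (simp_all add: sum_subtractf constraint_orthogonal)
  next
    show "\<Delta>t > 0" by (rule dt_pos)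
  next
    have "\<Delta>t * (\<delta> i \<bullet> (K i *\<^sub>v \<delta> i)) \<le> 2 / (1 - 2*\<gamma>) * (\<delta> i \<bullet> (M i *\<^sub>v \<delta> i))"
      if g: "\<gamma> < 1/2" and i: "i < S" for i
    proof -
      have "\<Delta>t * (\<delta> i \<bullet> (K i *\<^sub>v \<delta> i)) \<le> \<Delta>t * (omega_max (K i) (M i) * (\<delta> i \<bullet> (M i *\<^sub>v \<delta> i)))"
        using quadratic_form_le_omega_max[OF M_spd[rule_format, OF i] K_carrier[OF i] K_sym[OF i] \<delta>c[OF i]]
          dt_pos by simp
      also have "\<dots> = (\<Delta>t * omega_max (K i) (M i)) * (\<delta> i \<bullet> (M i *\<^sub>v \<delta> i))" by simp
      also have "\<dots> \<le> 2 / (1 - 2*\<gamma>) * (\<delta> i \<bullet> (M i *\<^sub>v \<delta> i))"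
        using stable g i pos_def_mat_nonneg[OF M_spd[rule_format, OF i] \<delta>c[OF i]]
        by (intro mult_right_mono) auto
      finally show ?thesis .
    qed
    then show "1/2 \<le> \<gamma> \<or> (\<gamma> < 1/2 \<and> (\<forall>i\<in>{..<S}. \<Delta>t * (\<delta> i \<bullet> (K i *\<^sub>v \<delta> i))
        \<le> 2 / (1 - 2*\<gamma>) * (\<delta> i \<bullet> (M i *\<^sub>v \<delta> i))))"
      by auto
  qed
  then show ?thesis unfolding energy_def by (simp add: sum_subtractf)
qed

lemma energy_le_initial: "energy f n \<le> energy f 0"
  by (induction n) (use energy_Suc_le order_trans in blast)+

lemma component_energy_le: "i < S \<Longrightarrow> f i n \<bullet> (M i *\<^sub>v f i n) \<le> energy f n"
  unfolding energy_def
  by (rule member_le_sum) (auto intro: pos_def_mat_nonneg[OF M_spd[rule_format]])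

lemma energy_eq_0_if_no_stiffness:
  assumes K0: "\<forall>i<S. \<forall>x\<in>carrier_vec (m i). K i *\<^sub>v x = 0\<^sub>v (m i)"
  shows "energy f n = 0"
proof -
  have "f i n \<bullet> (M i *\<^sub>v f i n) = \<mu> n \<bullet> (C i *\<^sub>v f i n)" if i: "i < S" for i
  proof -
    have "M i *\<^sub>v f i n = transpose_mat (C i) *\<^sub>v \<mu> n"
      using motion_at[OF i, of n] K0 i
        right_zero_vec[OF mult_mat_vec_carrier[OF M_carrier[OF i] f_carrier[OF i]]] by simp
    then show ?thesis using transpose_mult_mat_vec_scalar_prod[OF C_carrier[OF i] f_carrier[OF i] \<mu>_carrier]
      by simp
  qed
  then show ?thesis unfolding energy_def using constraint_orthogonal[OF \<mu>_carrier] by simp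
qed

end

section \<open>The Baumgarte stabilized method\<close>

lemma mult_mat_vec_minus_smult:
  fixes A :: "real mat"
  assumes "A \<in> carrier_mat nr nc" "x \<in> carrier_vec nc" "y \<in> carrier_vec nc"
  shows "A *\<^sub>v (x - r \<cdot>\<^sub>v y) = A *\<^sub>v x - r \<cdot>\<^sub>v (A *\<^sub>v y)"
  using assms by (simp add: mult_minus_distrib_mat_vec[of A nr nc] mult_mat_vec)

lemma add_minus_smult_vec:
  fixes a b c e :: "real vec"
  assumes "a \<in> carrier_vec n" "b \<in> carrier_vec n" "c \<in> carrier_vec n" "e \<in> carrier_vec n"
  shows "(a - r \<cdot>\<^sub>v b) + (c - r \<cdot>\<^sub>v e) = (a + c) - r \<cdot>\<^sub>v (b + e)"
  using assms by (intro eq_vecI) (auto simp: algebra_simps)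

lemma mult_mat_vec_newmark_update:
  fixes A :: "real mat"
  assumes "A \<in> carrier_mat nr nc" "x \<in> carrier_vec nc" "y \<in> carrier_vec nc" "z \<in> carrier_vec nc"
  shows "A *\<^sub>v (x + t \<cdot>\<^sub>v (s1 \<cdot>\<^sub>v y + s2 \<cdot>\<^sub>v z)) = A *\<^sub>v x + t \<cdot>\<^sub>v (s1 \<cdot>\<^sub>v (A *\<^sub>v y) + s2 \<cdot>\<^sub>v (A *\<^sub>v z))"
  using assms by (simp add: mult_add_distrib_mat_vec[of A nr nc] mult_mat_vec)

lemma le_max_of_affine_contraction:
  fixes x :: "nat \<Rightarrow> real"
  assumes step: "\<And>n. x (Suc n) \<le> q * x n + b" and q: "0 \<le> q" "q < 1"
  shows "x n \<le> max (x 0) (b / (1 - q))"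
proof (induction n)
  case (Suc n)
  have "q * x n \<le> q * max (x 0) (b / (1 - q))" using Suc q by (intro mult_left_mono) auto
  moreover have "q * max (x 0) (b / (1 - q)) + b \<le> max (x 0) (b / (1 - q))"
    using q by (simp add: max_def field_simps split: if_splits)
  ultimately show ?case using step[of n] by linarith
qed simp

definition baumgarte_factor :: "real \<Rightarrow> real \<Rightarrow> real" where
  "baumgarte_factor \<alpha> \<gamma> = (1 - \<alpha> * (1 - \<gamma>)) / (1 + \<alpha> * \<gamma>)"

lemma baumgarte_factor_bounds:
  assumes "0 \<le> \<gamma>" "\<alpha> > 0" "\<alpha> * (1 - 2*\<gamma>) \<le> 2"
  shows "(1 + \<alpha> * \<gamma>) * baumgarte_factor \<alpha> \<gamma> = 1 - \<alpha> * (1 - \<gamma>)"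
    and "-1 \<le> baumgarte_factor \<alpha> \<gamma>" "baumgarte_factor \<alpha> \<gamma> < 1"
    and "baumgarte_factor \<alpha> \<gamma> = -1 \<Longrightarrow> \<alpha> * (1 - 2*\<gamma>) = 2"
proof -
  have den: "1 + \<alpha> * \<gamma> > 0" using assms by (simp add: add_pos_nonneg)
  then show "(1 + \<alpha> * \<gamma>) * baumgarte_factor \<alpha> \<gamma> = 1 - \<alpha> * (1 - \<gamma>)"
    unfolding baumgarte_factor_def by simp
  show "-1 \<le> baumgarte_factor \<alpha> \<gamma>" "baumgarte_factor \<alpha> \<gamma> < 1"
    unfolding baumgarte_factor_def using den assms by (simp_all add: field_simps)
  show "\<alpha> * (1 - 2*\<gamma>) = 2" if "baumgarte_factor \<alpha> \<gamma> = -1"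
    using that den unfolding baumgarte_factor_def by (simp add: field_simps)
qed

locale baumgarte_solution = newmark_subsystems +
  fixes \<gamma> \<Delta>t \<alpha> :: real and d v :: "nat \<Rightarrow> nat \<Rightarrow> real vec" and lam :: "nat \<Rightarrow> real vec"
  assumes C_rank: "vec_space.rank p (block_row p C S) = p"
    and gamma: "0 \<le> \<gamma>" "\<gamma> \<le> 1"
    and dt: "\<Delta>t > 0" and alpha: "\<alpha> > 0"
    and stab: "(1/2 \<le> \<gamma> \<and> \<gamma> \<le> 1) \<or>
               (0 \<le> \<gamma> \<and> \<gamma> < 1/2 \<and> \<alpha> \<le> 1 / \<bar>\<gamma> - 1/2\<bar> \<and>
                (\<forall>i<S. \<Delta>t * omega_max (K i) (M i) \<le> 2 / (1 - 2*\<gamma>) - \<alpha>))"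
    and d_dim: "\<forall>i<S. \<forall>n. d i n \<in> carrier_vec (m i)"
    and v_dim: "\<forall>i<S. \<forall>n. v i n \<in> carrier_vec (m i)"
    and lam_dim: "\<forall>n. lam n \<in> carrier_vec p"
    and eq_motion: "\<forall>n. \<forall>i<S.
          M i *\<^sub>v v i n + K i *\<^sub>v d i n = transpose_mat (C i) *\<^sub>v lam n"
    and eq_constr: "\<forall>n.
          vsum p (\<lambda>i. C i *\<^sub>v v i n) {..<S} + (\<alpha> / \<Delta>t) \<cdot>\<^sub>v vsum p (\<lambda>i. C i *\<^sub>v d i n) {..<S}
          = 0\<^sub>v p"
    and eq_update: "\<forall>n. \<forall>i<S.
          d i (Suc n) = d i n + \<Delta>t \<cdot>\<^sub>v ((1 - \<gamma>) \<cdot>\<^sub>v v i n + \<gamma> \<cdot>\<^sub>v v i (Suc n))"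
begin

lemma d_carrier [simp]: "i < S \<Longrightarrow> d i n \<in> carrier_vec (m i)"
  and v_carrier [simp]: "i < S \<Longrightarrow> v i n \<in> carrier_vec (m i)"
  and lam_carrier [simp]: "lam n \<in> carrier_vec p"
  using d_dim v_dim lam_dim by auto

lemma dim_solution_vecs [simp]:
  "i < S \<Longrightarrow> dim_vec (d i n) = m i" "i < S \<Longrightarrow> dim_vec (v i n) = m i" "dim_vec (lam n) = p"
  using d_carrier v_carrier lam_carrier unfolding carrier_vec_def by auto

lemma motion_at: "i < S \<Longrightarrow> M i *\<^sub>v v i n + K i *\<^sub>v d i n = transpose_mat (C i) *\<^sub>v lam n"
  and update_at: "i < S \<Longrightarrow> d i (Suc n) = d i n + \<Delta>t \<cdot>\<^sub>v ((1 - \<gamma>) \<cdot>\<^sub>v v i n + \<gamma> \<cdot>\<^sub>v v i (Suc n))"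
  using eq_motion eq_update by auto

definition drift :: "nat \<Rightarrow> real vec" where
  "drift n = vsum p (\<lambda>i. C i *\<^sub>v d i n) {..<S}"

definition \<rho> :: real where
  "\<rho> = baumgarte_factor \<alpha> \<gamma>"

lemma \<rho>_bounds: "(1 + \<alpha> * \<gamma>) * \<rho> = 1 - \<alpha> * (1 - \<gamma>)" "-1 \<le> \<rho>" "\<rho> < 1"
  and \<rho>_eq_minus_one: "\<rho> = -1 \<Longrightarrow> \<alpha> * (1 - 2*\<gamma>) = 2"
proof -
  have "\<alpha> * (1 - 2*\<gamma>) \<le> 2"
  proof (cases "1/2 \<le> \<gamma>")
    case True
    then show ?thesis using mult_nonneg_nonpos[of \<alpha> "1 - 2*\<gamma>"] alpha by linarith
  next
    case False
    then have "\<alpha> \<le> 2 / (1 - 2*\<gamma>)" using stab by (simp add: abs_if field_simps)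
    then show ?thesis using False by (simp add: le_divide_eq mult.commute)
  qed
  note b = baumgarte_factor_bounds[OF gamma(1) alpha this, folded \<rho>_def]
  show "(1 + \<alpha> * \<gamma>) * \<rho> = 1 - \<alpha> * (1 - \<gamma>)" "-1 \<le> \<rho>" "\<rho> < 1" by (fact b)+
  show "\<alpha> * (1 - 2*\<gamma>) = 2" if "\<rho> = -1" using b(4) that .
qed

lemma constraint_velocity: "k < p \<Longrightarrow> vsum p (\<lambda>i. C i *\<^sub>v v i n) {..<S} $ k = - (\<alpha> / \<Delta>t) * drift n $ k"
  using arg_cong[OF eq_constr[rule_format, of n], of "\<lambda>x. x $ k"]
  unfolding drift_def by (simp add: vsum_carrier[THEN carrier_vecD] index_vsum)

text \<open>By the stabilized constraint the drift moves with velocity -(\<alpha>/\<Delta>t) times itself,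
  and the Newmark update of such a linear mode is multiplication by \<rho>.\<close>
lemma drift_Suc: "drift (Suc n) = \<rho> \<cdot>\<^sub>v drift n"
proof (rule eq_vecI)
  fix k assume "k < dim_vec (\<rho> \<cdot>\<^sub>v drift n)"
  then have k: "k < p" unfolding drift_def by (simp add: vsum_def)
  let ?g = "\<lambda>n. drift n $ k" and ?h = "\<lambda>n. vsum p (\<lambda>i. C i *\<^sub>v v i n) {..<S} $ k"
  have "?g (Suc n) = ?g n + \<Delta>t * ((1 - \<gamma>) * ?h n + \<gamma> * ?h (Suc n))"
    unfolding drift_def using k
    by (simp add: index_vsum update_at mult_mat_vec_newmark_update[OF C_carrier d_carrier v_carrier v_carrier]
        sum.distrib sum_distrib_left distrib_left)
  also have "\<dots> = ?g n - \<alpha> * (1 - \<gamma>) * ?g n - \<alpha> * \<gamma> * ?g (Suc n)"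
    using dt by (simp add: constraint_velocity[OF k] field_simps)
  finally have "(1 + \<alpha> * \<gamma>) * ?g (Suc n) = (1 - \<alpha> * (1 - \<gamma>)) * ?g n"
    by (simp add: algebra_simps)
  also have "1 - \<alpha> * (1 - \<gamma>) = (1 + \<alpha> * \<gamma>) * \<rho>" using \<rho>_bounds(1) by simp
  finally have "(1 + \<alpha> * \<gamma>) * ?g (Suc n) = (1 + \<alpha> * \<gamma>) * (\<rho> * ?g n)" by simp
  moreover have "\<alpha> * \<gamma> \<ge> 0" using alpha gamma by simp
  then have "1 + \<alpha> * \<gamma> \<noteq> 0" by linarith
  ultimately show "drift (Suc n) $ k = (\<rho> \<cdot>\<^sub>v drift n) $ k"
    using k by (simp add: drift_def vsum_def)
qed (simp add: drift_def vsum_def)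

lemma drift_bounded: "vnorm (drift n) \<le> vnorm (drift 0)"
proof (induction n)
  case (Suc n)
  have "vnorm (drift (Suc n)) = \<bar>\<rho>\<bar> * vnorm (drift n)"
    unfolding drift_Suc by (rule vnorm_smult[of _ p]) (simp add: drift_def vsum_carrier)
  also have "\<dots> \<le> vnorm (drift n)"
    using \<rho>_bounds vnorm_nonneg[of "drift n"] by (intro mult_left_le_one_le) auto
  finally show ?case using Suc by simp
qed simp

definition v_shift :: "nat \<Rightarrow> nat \<Rightarrow> real vec" where
  "v_shift i n = v i (Suc n) - \<rho> \<cdot>\<^sub>v v i n"

definition d_shift :: "nat \<Rightarrow> nat \<Rightarrow> real vec" where
  "d_shift i n = d i (Suc n) - \<rho> \<cdot>\<^sub>v d i n"

definition lam_shift :: "nat \<Rightarrow> real vec" where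
  "lam_shift n = lam (Suc n) - \<rho> \<cdot>\<^sub>v lam n"

lemma shift_carrier [simp]:
  "i < S \<Longrightarrow> v_shift i n \<in> carrier_vec (m i)" "i < S \<Longrightarrow> d_shift i n \<in> carrier_vec (m i)"
  "lam_shift n \<in> carrier_vec p"
  unfolding v_shift_def d_shift_def lam_shift_def by auto

lemma dim_shift [simp]:
  "i < S \<Longrightarrow> dim_vec (v_shift i n) = m i" "i < S \<Longrightarrow> dim_vec (d_shift i n) = m i"
  unfolding v_shift_def d_shift_def by auto

lemma dim_drift [simp]: "dim_vec (drift n) = p"
  unfolding drift_def vsum_def by simp

lemma shifted_motion:
  assumes i: "i < S"
  shows "M i *\<^sub>v v_shift i n + K i *\<^sub>v d_shift i n = transpose_mat (C i) *\<^sub>v lam_shift n"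
proof -
  have "M i *\<^sub>v v_shift i n + K i *\<^sub>v d_shift i n
      = (M i *\<^sub>v v i (Suc n) - \<rho> \<cdot>\<^sub>v (M i *\<^sub>v v i n)) + (K i *\<^sub>v d i (Suc n) - \<rho> \<cdot>\<^sub>v (K i *\<^sub>v d i n))"
    unfolding v_shift_def d_shift_def using i
    by (simp add: mult_mat_vec_minus_smult[of "M i" "m i" "m i"] mult_mat_vec_minus_smult[of "K i" "m i" "m i"])
  also have "\<dots> = (M i *\<^sub>v v i (Suc n) + K i *\<^sub>v d i (Suc n)) - \<rho> \<cdot>\<^sub>v (M i *\<^sub>v v i n + K i *\<^sub>v d i n)"
    using mult_mat_vec_carrier[OF M_carrier[OF i] v_carrier[OF i]]
      mult_mat_vec_carrier[OF K_carrier[OF i] d_carrier[OF i]]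
    by (intro add_minus_smult_vec) auto
  also have "\<dots> = transpose_mat (C i) *\<^sub>v lam_shift n"
    unfolding motion_at[OF i] lam_shift_def using i
    by (simp add: mult_mat_vec_minus_smult[of _ "m i" p])
  finally show ?thesis .
qed

lemma shifted_constraint: "vsum p (\<lambda>i. C i *\<^sub>v v_shift i n) {..<S} = 0\<^sub>v p"
proof (rule eq_vecI)
  fix k assume "k < dim_vec (0\<^sub>v p)"
  then have k: "k < p" by simp
  have "(C i *\<^sub>v v_shift i n) $ k = (C i *\<^sub>v v i (Suc n)) $ k - \<rho> * (C i *\<^sub>v v i n) $ k" if "i < S" for i
    using k that unfolding v_shift_def by (simp add: mult_mat_vec_minus_smult[of "C i" p "m i"])
  then have "vsum p (\<lambda>i. C i *\<^sub>v v_shift i n) {..<S} $ k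
      = vsum p (\<lambda>i. C i *\<^sub>v v i (Suc n)) {..<S} $ k - \<rho> * vsum p (\<lambda>i. C i *\<^sub>v v i n) {..<S} $ k"
    using k by (simp add: index_vsum sum_subtractf sum_distrib_left)
  also have "\<dots> = - (\<alpha> / \<Delta>t) * (drift (Suc n) $ k - \<rho> * drift n $ k)"
    using k by (simp add: constraint_velocity algebra_simps)
  also have "\<dots> = 0" using k by (simp add: drift_Suc)
  finally show "vsum p (\<lambda>i. C i *\<^sub>v v_shift i n) {..<S} $ k = 0\<^sub>v p $ k" using k by simp
qed (simp add: vsum_def)

lemma shifted_update:
  assumes i: "i < S"
  shows "d_shift i (Suc n) = d_shift i n + \<Delta>t \<cdot>\<^sub>v ((1 - \<gamma>) \<cdot>\<^sub>v v_shift i n + \<gamma> \<cdot>\<^sub>v v_shift i (Suc n))"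
proof (rule eq_vecI)
  fix j assume "j < dim_vec (d_shift i n + \<Delta>t \<cdot>\<^sub>v ((1 - \<gamma>) \<cdot>\<^sub>v v_shift i n + \<gamma> \<cdot>\<^sub>v v_shift i (Suc n)))"
  then have j: "j < m i" using i by simp
  have upd: "d i (Suc k) $ j = d i k $ j + \<Delta>t * ((1 - \<gamma>) * v i k $ j + \<gamma> * v i (Suc k) $ j)" for k
    using i j by (subst update_at[OF i]) simp
  show "d_shift i (Suc n) $ j = (d_shift i n + \<Delta>t \<cdot>\<^sub>v ((1 - \<gamma>) \<cdot>\<^sub>v v_shift i n + \<gamma> \<cdot>\<^sub>v v_shift i (Suc n))) $ j"
    using i j unfolding d_shift_def v_shift_def by (simp add: upd algebra_simps)
qed (use i in \<open>simp add: d_shift_def v_shift_def\<close>)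

text \<open>Removing the drift mode: the shifted sequences solve the Newmark scheme with the
  homogeneous constraint, where the stability condition without \<alpha> suffices.\<close>
sublocale shifted: homogeneous_newmark S p m M K C \<gamma> \<Delta>t v_shift d_shift lam_shift
proof unfold_locales
  show "\<forall>i<S. \<forall>n. v_shift i n \<in> carrier_vec (m i)" "\<forall>i<S. \<forall>n. d_shift i n \<in> carrier_vec (m i)"
    "\<forall>n. lam_shift n \<in> carrier_vec p" "\<Delta>t > 0"
    using dt by simp_all
  show "\<forall>n. \<forall>i<S. M i *\<^sub>v v_shift i n + K i *\<^sub>v d_shift i n = transpose_mat (C i) *\<^sub>v lam_shift n"
    "\<forall>n. vsum p (\<lambda>i. C i *\<^sub>v v_shift i n) {..<S} = 0\<^sub>v p"
    "\<forall>n. \<forall>i<S. d_shift i (Suc n)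
        = d_shift i n + \<Delta>t \<cdot>\<^sub>v ((1 - \<gamma>) \<cdot>\<^sub>v v_shift i n + \<gamma> \<cdot>\<^sub>v v_shift i (Suc n))"
    using shifted_motion shifted_constraint shifted_update by blast+
  show "1/2 \<le> \<gamma> \<or> (\<gamma> < 1/2 \<and> (\<forall>i<S. \<Delta>t * omega_max (K i) (M i) \<le> 2 / (1 - 2*\<gamma>)))"
  proof (cases "1/2 \<le> \<gamma>")
    case False
    have "\<Delta>t * omega_max (K i) (M i) \<le> 2 / (1 - 2*\<gamma>)" if "i < S" for i
      using stab False that alpha by fastforce
    then show ?thesis using False by simp
  qed simp
qed

lemma stiffness_vanishes_if_\<rho>_minus_one:
  assumes \<rho>: "\<rho> = -1" and i: "i < S" and x: "x \<in> carrier_vec (m i)"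
  shows "K i *\<^sub>v x = 0\<^sub>v (m i)"
proof -
  have prod: "\<alpha> * (1 - 2*\<gamma>) = 2" by (rule \<rho>_eq_minus_one[OF \<rho>])
  then have g: "\<gamma> < 1/2"
    using alpha mult_nonneg_nonpos[of \<alpha> "1 - 2*\<gamma>"] by (cases "\<gamma> < 1/2") auto
  then have "2 / (1 - 2*\<gamma>) - \<alpha> = 0" using prod by (simp add: field_simps)
  then have "\<Delta>t * omega_max (K i) (M i) \<le> 0" using stab g i by auto
  then have "omega_max (K i) (M i) \<le> 0" using dt by (simp add: mult_le_0_iff)
  then have le: "y \<bullet> (K i *\<^sub>v y) \<le> 0 * (y \<bullet> (M i *\<^sub>v y))" if "y \<in> carrier_vec (m i)" for y
    using quadratic_form_le_omega_max[OF M_spd[rule_format, OF i] K_carrier[OF i] K_sym[OF i] that]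
      mult_nonpos_nonneg[OF _ pos_def_mat_nonneg[OF M_spd[rule_format, OF i] that]] by force
  have "x \<bullet> (K i *\<^sub>v x) = 0 * (x \<bullet> (M i *\<^sub>v x))" using le[OF x] K_nonneg[OF i x] by simp
  then have "K i *\<^sub>v x = 0 \<cdot>\<^sub>v (M i *\<^sub>v x)"
    using max_ratio_gen_eigenvector[OF M_carrier[OF i] M_sym[OF i] K_carrier[OF i] K_sym[OF i] le x] by blast
  then show ?thesis using i by (intro eq_vecI) auto
qed

lemma velocity_bounded:
  assumes i: "i < S"
  shows "\<exists>B. \<forall>n. vnorm (v i n) \<le> B"
proof -
  obtain c where c: "c > 0" and coercive: "\<And>x. x \<in> carrier_vec (m i) \<Longrightarrow> c * (x \<bullet> x) \<le> x \<bullet> (M i *\<^sub>v x)"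
    using pos_def_mat_coercive[OF M_spd[rule_format, OF i]] by blast
  define B where "B = sqrt (energy v_shift 0 / c)"
  have shift_bound: "vnorm (v_shift i n) \<le> B" for n
  proof -
    have "c * (v_shift i n \<bullet> v_shift i n) \<le> energy v_shift 0"
      using coercive[of "v_shift i n"] shifted.component_energy_le[OF i, of n]
        shifted.energy_le_initial[of n] i by simp
    then show ?thesis unfolding vnorm_def B_def using c by (simp add: field_simps)
  qed
  have step: "vnorm (v i (Suc n)) \<le> \<bar>\<rho>\<bar> * vnorm (v i n) + B" for n
  proof -
    have "v i (Suc n) = \<rho> \<cdot>\<^sub>v v i n + v_shift i n"
      unfolding v_shift_def using i by (intro eq_vecI) auto
    then have "vnorm (v i (Suc n)) \<le> vnorm (\<rho> \<cdot>\<^sub>v v i n) + vnorm (v_shift i n)"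
      using vnorm_triangle[of "\<rho> \<cdot>\<^sub>v v i n" "m i" "v_shift i n"] i by simp
    then show ?thesis using vnorm_smult[of "v i n" "m i" \<rho>] shift_bound[of n] i by simp
  qed
  show ?thesis
  proof (cases "\<rho> = -1")
    case True
    have "energy v_shift 0 = 0"
      using shifted.energy_eq_0_if_no_stiffness stiffness_vanishes_if_\<rho>_minus_one[OF True] by blast
    then have "vnorm (v i (Suc n)) \<le> vnorm (v i n)" for n using step[of n] True by (simp add: B_def)
    then have "vnorm (v i n) \<le> vnorm (v i 0)" for n by (induction n) (auto intro: order_trans)
    then show ?thesis by blast
  next
    case False
    then have "\<bar>\<rho>\<bar> < 1" using \<rho>_bounds by auto
    then show ?thesis using le_max_of_affine_contraction[of "\<lambda>n. vnorm (v i n)", OF step] by auto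
  qed
qed

lemma displacement_increment:
  "i < S \<Longrightarrow> d i (Suc n) - d i n = \<Delta>t \<cdot>\<^sub>v ((1 - \<gamma>) \<cdot>\<^sub>v v i n + \<gamma> \<cdot>\<^sub>v v i (Suc n))"
  using update_at[of i n] by (intro eq_vecI) auto

lemma displacement_increment_bounded:
  assumes i: "i < S"
  shows "\<exists>B. \<forall>n. vnorm (d i (Suc n) - d i n) \<le> B"
proof -
  obtain B where B: "\<And>n. vnorm (v i n) \<le> B" using velocity_bounded[OF i] by blast
  have "vnorm (d i (Suc n) - d i n) \<le> \<Delta>t * B" for n
  proof -
    have "vnorm ((1 - \<gamma>) \<cdot>\<^sub>v v i n + \<gamma> \<cdot>\<^sub>v v i (Suc n)) \<le> (1 - \<gamma>) * vnorm (v i n) + \<gamma> * vnorm (v i (Suc n))"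
      using vnorm_triangle[of "(1 - \<gamma>) \<cdot>\<^sub>v v i n" "m i" "\<gamma> \<cdot>\<^sub>v v i (Suc n)"]
        vnorm_smult[of "v i n" "m i"] vnorm_smult[of "v i (Suc n)" "m i"] i gamma by simp
    also have "\<dots> \<le> (1 - \<gamma>) * B + \<gamma> * B"
      using B gamma by (intro add_mono mult_left_mono) auto
    finally show ?thesis
      unfolding displacement_increment[OF i] using vnorm_smult[of _ "m i" \<Delta>t] i dt
      by (simp add: algebra_simps mult_left_mono)
  qed
  then show ?thesis by blast
qed

text \<open>Full row rank of [C_1 ... C_S] makes x \<mapsto> sum_i |C_i^T x|^2 coercive, while each
  C_i^T (\<lambda>(n+1) - \<lambda>(n)) = M_i (v_i(n+1) - v_i(n)) + K_i (d_i(n+1) - d_i(n)) is bounded.\<close>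
lemma multiplier_increment_bounded: "\<exists>B. \<forall>n. vnorm (lam (Suc n) - lam n) \<le> B"
proof -
  have "\<forall>i. \<exists>B. i < S \<longrightarrow> (\<forall>n. vnorm (v i n) \<le> B)" using velocity_bounded by blast
  then obtain V where V: "\<And>i n. i < S \<Longrightarrow> vnorm (v i n) \<le> V i" by metis
  have "\<forall>i. \<exists>B. i < S \<longrightarrow> (\<forall>n. vnorm (d i (Suc n) - d i n) \<le> B)"
    using displacement_increment_bounded by blast
  then obtain D where D: "\<And>i n. i < S \<Longrightarrow> vnorm (d i (Suc n) - d i n) \<le> D i" by metis
  define Z where "Z i = frobenius_norm (M i) * (2 * V i) + frobenius_norm (K i) * D i" for i
  obtain c where c: "c > 0" and coercive: "\<And>x. x \<in> carrier_vec p \<Longrightarrow>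
      c * (x \<bullet> x) \<le> (\<Sum>i<S. (transpose_mat (C i) *\<^sub>v x) \<bullet> (transpose_mat (C i) *\<^sub>v x))"
    using block_row_full_rank_coercive[OF C_dim C_rank] by blast
  have Z: "vnorm (transpose_mat (C i) *\<^sub>v (lam (Suc n) - lam n)) \<le> Z i" if i: "i < S" for i n
  proof -
    have dv: "v i (Suc n) - v i n \<in> carrier_vec (m i)" and dd: "d i (Suc n) - d i n \<in> carrier_vec (m i)"
      using i by simp_all
    have "transpose_mat (C i) *\<^sub>v (lam (Suc n) - lam n)
        = (M i *\<^sub>v v i (Suc n) + K i *\<^sub>v d i (Suc n)) - (M i *\<^sub>v v i n + K i *\<^sub>v d i n)"
      using i by (simp add: mult_minus_distrib_mat_vec[of _ "m i" p] flip: motion_at)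
    also have "\<dots> = (M i *\<^sub>v v i (Suc n) - M i *\<^sub>v v i n) + (K i *\<^sub>v d i (Suc n) - K i *\<^sub>v d i n)"
      using i by (intro eq_vecI) auto
    also have "\<dots> = M i *\<^sub>v (v i (Suc n) - v i n) + K i *\<^sub>v (d i (Suc n) - d i n)"
      using i by (simp add: mult_minus_distrib_mat_vec[of _ "m i" "m i"])
    finally have "vnorm (transpose_mat (C i) *\<^sub>v (lam (Suc n) - lam n))
        \<le> vnorm (M i *\<^sub>v (v i (Suc n) - v i n)) + vnorm (K i *\<^sub>v (d i (Suc n) - d i n))"
      using vnorm_triangle mult_mat_vec_carrier[OF M_carrier[OF i] dv]
        mult_mat_vec_carrier[OF K_carrier[OF i] dd] by metis
    also have "\<dots> \<le> frobenius_norm (M i) * vnorm (v i (Suc n) - v i n)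
        + frobenius_norm (K i) * vnorm (d i (Suc n) - d i n)"
      by (intro add_mono vnorm_mult_mat_vec_le[OF M_carrier[OF i] dv] vnorm_mult_mat_vec_le[OF K_carrier[OF i] dd])
    also have "\<dots> \<le> Z i"
      unfolding Z_def using i V[of i n] V[of i "Suc n"] D[of i n] vnorm_diff_le[of "v i (Suc n)" "m i" "v i n"]
      by (intro add_mono mult_left_mono frobenius_norm_nonneg) auto
    finally show ?thesis .
  qed
  have "vnorm (lam (Suc n) - lam n) \<le> sqrt ((\<Sum>i<S. (Z i)^2) / c)" for n
  proof -
    let ?x = "lam (Suc n) - lam n"
    have "c * (?x \<bullet> ?x) \<le> (\<Sum>i<S. (vnorm (transpose_mat (C i) *\<^sub>v ?x))^2)"
      using coercive[of ?x] by (simp add: vnorm_power2)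
    also have "\<dots> \<le> (\<Sum>i<S. (Z i)^2)"
      using Z vnorm_nonneg by (intro sum_mono power_mono) auto
    finally show ?thesis unfolding vnorm_def using c by (simp add: field_simps)
  qed
  then show ?thesis by blast
qed

end

theorem mainTheorem5:
  fixes S p :: nat and m :: "nat \<Rightarrow> nat"
    and M K C :: "nat \<Rightarrow> real mat"
    and \<gamma> \<Delta>t \<alpha> :: real
    and d v :: "nat \<Rightarrow> nat \<Rightarrow> real vec"   (* d i n, v i n *)
    and lam :: "nat \<Rightarrow> real vec"
  assumes S_ge: "S \<ge> 1"
    and M_spd: "\<forall>i<S. pos_def_mat (m i) (M i)"
    and K_spsd: "\<forall>i<S. pos_semidef_mat (m i) (K i)"
    and C_dim: "\<forall>i<S. C i \<in> carrier_mat p (m i)"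
    and C_sb: "\<forall>i<S. signed_boolean_mat (C i)"
    and C_rank: "vec_space.rank p (block_row p C S) = p"
    and gamma: "0 \<le> \<gamma>" "\<gamma> \<le> 1"
    and dt: "\<Delta>t > 0" and alpha: "\<alpha> > 0"
    and stab: "(1/2 \<le> \<gamma> \<and> \<gamma> \<le> 1) \<or>
               (0 \<le> \<gamma> \<and> \<gamma> < 1/2 \<and> \<alpha> \<le> 1 / \<bar>\<gamma> - 1/2\<bar> \<and>
                (\<forall>i<S. \<Delta>t * omega_max (K i) (M i) \<le> 2 / (1 - 2*\<gamma>) - \<alpha>))"
    and d_dim: "\<forall>i<S. \<forall>n. d i n \<in> carrier_vec (m i)"
    and v_dim: "\<forall>i<S. \<forall>n. v i n \<in> carrier_vec (m i)"
    and lam_dim: "\<forall>n. lam n \<in> carrier_vec p"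
    and eq_motion: "\<forall>n. \<forall>i<S.
          M i *\<^sub>v v i n + K i *\<^sub>v d i n = transpose_mat (C i) *\<^sub>v lam n"
    and eq_constr: "\<forall>n.
          vsum p (\<lambda>i. C i *\<^sub>v v i n) {..<S} + (\<alpha> / \<Delta>t) \<cdot>\<^sub>v vsum p (\<lambda>i. C i *\<^sub>v d i n) {..<S}
          = 0\<^sub>v p"
    and eq_update: "\<forall>n. \<forall>i<S.
          d i (Suc n) = d i n + \<Delta>t \<cdot>\<^sub>v ((1 - \<gamma>) \<cdot>\<^sub>v v i n + \<gamma> \<cdot>\<^sub>v v i (Suc n))"
  shows "(\<forall>i<S. bounded_seq (v i))
       \<and> (\<forall>i<S. bounded_seq (\<lambda>n. d i (Suc n) - d i n))
       \<and> bounded_seq (\<lambda>n. lam (Suc n) - lam n)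
       \<and> bounded_seq (\<lambda>n. vsum p (\<lambda>i. C i *\<^sub>v d i n) {..<S})"
proof -
  interpret baumgarte_solution S p m M K C \<gamma> \<Delta>t \<alpha> d v lam
    using assms by unfold_locales auto
  show ?thesis
    unfolding bounded_seq_iff drift_def[symmetric]
    using velocity_bounded displacement_increment_bounded multiplier_increment_bounded
      drift_bounded by blast
qed

end
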